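(* Consider the multi-agent system $\dot x_i(t)=u_i(t)$, $t\geqslant 0$, $i=1,\dots,N$, $x_i\in\mathbb{R}$, with sampled control input, for $t\in[t_k,t_{k+1})$, $$u_i(t)=\begin{cases}0, & t_k\in\Xi(0,+\infty),\\ \sum_{j=1}^N a_{ij}(x_j(t_k)-x_i(t_k)), & t_k\in\Theta(0,+\infty),\end{cases}$$ where the Laplacian $\mathscr{L}$ is symmetric and irreducible, and $\xi$ is a DoS sequence that is not an edge case. Let $t_1=0$ and $t_{k+1}=t_k+\Delta_k$, where $\Delta_k=\Delta_0$ if $t_k\in[0,h_1+\tau_1)$, with $\Delta_0>0$ satisfying $\lvert 1-\Delta_0\lambda_N(\mathscr{L})\rvert<1$, and $$\Delta_k=\min\left\{\Delta_0,\ \frac{1-\hat B_d(h_n+\tau_n)}{\gamma_1\hat B_f(h_n)}\right\}\quad\text{if } t_k\in[h_n+\tau_n,h_{n+1}+\tau_{n+1}),\ n\in\mathbb{N}_+,$$ with a constant $\gamma_1>1$, where $\hat B_d,\hat B_f$ are generated by the DoS estimator (with any parameters $2\leqslant\ell\in\mathbb{N}_+$, $0<\epsilon_0<1$, $0<\theta<1$). Then the system reaches average consensus, i.e. $\lim_{t\to+\infty}\big(x_i(t)-\frac1N\sum_{j=1}^N x_j(0)\big)=0$ for all $i$, and there exists a constant $\underline{\Delta}>0$ with $\Delta_k\geqslant\underline{\Delta}$ for all $k$.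
   Context: A DoS sequence $\xi=\{H_n\}$ is a finite or infinite sequence of sets $H_n := \{h_n\}\cup[h_n,h_n+\tau_n)$, where $h_1\geqslant 0$, $\tau_n\geqslant 0$ and $h_{n+1} > h_n+\tau_n$ for all $n$. If $\xi$ has only $m$ elements, the convention $h_{n}=h_{n}+\tau_{n}=+\infty$ for $n>m$ is used. For $0\leqslant \tau\leqslant s$ let $\Xi(\tau,s) := \bigcup_n H_n\cap[\tau,s]$ (times under attack, where transmissions fail), $\Theta(\tau,s):=[\tau,s]\setminus\Xi(\tau,s)$, and $n_\xi(\tau,s) := \operatorname{card}(\{h_n\}_n\cap[\tau,s])$; $\lvert\cdot\rvert$ denotes Lebesgue measure; $\Xi(0,+\infty)=\bigcup_n H_n$, $\Theta(0,+\infty)=[0,+\infty)\setminus\Xi(0,+\infty)$. A constant $B_d\in[0,1]$ is a duration-bound of $\xi$ if there is $0<\kappa<+\infty$ with $\lvert \Xi(0,t)\rvert\leqslant \kappa + B_d t$ for all $t\geqslant 0$. A constant $B_f\in[0,+\infty)$ is a frequency-bound of $\xi$ if there is an integer $0<\Lambda<+\infty$ with $n_\xi(0,t)\leqslant \Lambda + B_f t$ for all $t\geqslant 0$; if no such finite $B_f$ exists, the frequency-bound is $+\infty$. $\mathcal{D}(\xi)$, $\mathcal{F}(\xi)$ are the sets of duration- and frequency-bounds. $\xi$ is an edge case if (i) $\inf\mathcal{D}(\xi)=1$, or (ii) $\inf\mathcal{F}(\xi)=+\infty$, or (iii) for every $\Gamma>0$ there is $n$ with $\tau_n>\Gamma$.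 DoS estimator: with $B_d(i) := \frac{\lvert \Xi(0,h_i+\tau_i)\rvert}{h_i+\tau_i}$ and $B_f(i) := \frac{i}{h_i}$, $\hat B_d(t) = \epsilon_0$ for $t\in[0,h_\ell+\tau_\ell)$, $\hat B_d(t) = \max_{\ell\leqslant i\leqslant n}\{\epsilon_0,\ \theta B_d(i)+(1-\theta)\}$ for $t\in[h_n+\tau_n, h_{n+1}+\tau_{n+1})$, $n\geqslant \ell$; $\hat B_f(t) = \epsilon_0$ for $t\in[0,h_\ell)$, $\hat B_f(t) = \max_{\ell\leqslant i\leqslant n}\{\epsilon_0,\ B_f(i)/\theta\}$ for $t\in[h_n,h_{n+1})$, $n\geqslant\ell$. Network: $a_{ij}\in\{0,1\}$, $a_{ij}=1$ iff agents $i,j$ are connected; Laplacian $\mathscr{L}=(l_{ij})$ with $l_{ij}=-a_{ij}$ ($i\neq j$), $l_{ii}=\sum_{j\neq i}a_{ij}$. Under symmetry and irreducibility its eigenvalues are $0=\lambda_1(\mathscr{L})<\lambda_2(\mathscr{L})\leqslant\cdots\leqslant\lambda_N(\mathscr{L})$. *)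

theory Defs
  imports "HOL-Analysis.Analysis" "HOL-Library.Extended_Nat" "HOL-Library.Extended_Real"
begin

text \<open>A DoS sequence is given by a number of attacks M (possibly infinite) and
  reals h n, tau n for the valid indices 1 \<le> n \<le> M. Values at other indices are
  irrelevant (they correspond to the convention h n = +\<infinity>).\<close>

definition dos_idx :: "enat \<Rightarrow> nat \<Rightarrow> bool" where
  "dos_idx M n \<longleftrightarrow> 1 \<le> n \<and> enat n \<le> M"

definition dos_seq :: "enat \<Rightarrow> (nat \<Rightarrow> real) \<Rightarrow> (nat \<Rightarrow> real) \<Rightarrow> bool" where
  "dos_seq M h tau \<longleftrightarrow>
     (dos_idx M 1 \<longrightarrow> 0 \<le> h 1) \<and>
     (\<forall>n. dos_idx M n \<longrightarrow> 0 \<le> tau n) \<and>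
     (\<forall>n. dos_idx M n \<and> dos_idx M (Suc n) \<longrightarrow> h n + tau n < h (Suc n))"

definition dos_attack_set :: "enat \<Rightarrow> (nat \<Rightarrow> real) \<Rightarrow> (nat \<Rightarrow> real) \<Rightarrow> real set" where
  "dos_attack_set M h tau = (\<Union>n\<in>{n. dos_idx M n}. {h n} \<union> {h n ..< h n + tau n})"

definition XiI :: "enat \<Rightarrow> (nat \<Rightarrow> real) \<Rightarrow> (nat \<Rightarrow> real) \<Rightarrow> real \<Rightarrow> real \<Rightarrow> real set" where
  "XiI M h tau a b = dos_attack_set M h tau \<inter> {a..b}"

definition dos_starts :: "enat \<Rightarrow> (nat \<Rightarrow> real) \<Rightarrow> real \<Rightarrow> real \<Rightarrow> real set" where
  "dos_starts M h a b = {h n | n. dos_idx M n} \<inter> {a..b}"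

definition duration_bounds :: "enat \<Rightarrow> (nat \<Rightarrow> real) \<Rightarrow> (nat \<Rightarrow> real) \<Rightarrow> real set" where
  "duration_bounds M h tau = {B. 0 \<le> B \<and> B \<le> 1 \<and>
     (\<exists>\<kappa>>0. \<forall>t\<ge>0. measure lborel (XiI M h tau 0 t) \<le> \<kappa> + B * t)}"

text \<open>n_xi(0,t) \<le> \<Lambda> + B t, where n_xi(0,t) is required to be finite (an infinite
  cardinality is never bounded by a real number).\<close>
definition frequency_bounds :: "enat \<Rightarrow> (nat \<Rightarrow> real) \<Rightarrow> real set" where
  "frequency_bounds M h = {B. 0 \<le> B \<and>
     (\<exists>\<Lambda>::nat. 0 < \<Lambda> \<and> (\<forall>t\<ge>0. finite (dos_starts M h 0 t) \<and>
        real (card (dos_starts M h 0 t)) \<le> real \<Lambda> + B * t))}"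

definition edge_case :: "enat \<Rightarrow> (nat \<Rightarrow> real) \<Rightarrow> (nat \<Rightarrow> real) \<Rightarrow> bool" where
  "edge_case M h tau \<longleftrightarrow>
     Inf (duration_bounds M h tau) = 1 \<or>
     (INF B\<in>frequency_bounds M h. ereal B) = \<infinity> \<or>
     (\<forall>\<Gamma>>0. \<exists>n. dos_idx M n \<and> tau n > \<Gamma>)"

definition Bd_i :: "enat \<Rightarrow> (nat \<Rightarrow> real) \<Rightarrow> (nat \<Rightarrow> real) \<Rightarrow> nat \<Rightarrow> real" where
  "Bd_i M h tau i = measure lborel (XiI M h tau 0 (h i + tau i)) / (h i + tau i)"

definition Bf_i :: "(nat \<Rightarrow> real) \<Rightarrow> nat \<Rightarrow> real" where
  "Bf_i h i = real i / h i"

text \<open>t \<in> [h_n + tau_n, h_(n+1) + tau_(n+1)) (with the convention h_(n+1) = +\<infinity> if n = M).\<close>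
definition phase_d :: "enat \<Rightarrow> (nat \<Rightarrow> real) \<Rightarrow> (nat \<Rightarrow> real) \<Rightarrow> nat \<Rightarrow> real \<Rightarrow> bool" where
  "phase_d M h tau n t \<longleftrightarrow> dos_idx M n \<and> h n + tau n \<le> t \<and>
     (dos_idx M (Suc n) \<longrightarrow> t < h (Suc n) + tau (Suc n))"

definition phase_f :: "enat \<Rightarrow> (nat \<Rightarrow> real) \<Rightarrow> nat \<Rightarrow> real \<Rightarrow> bool" where
  "phase_f M h n t \<longleftrightarrow> dos_idx M n \<and> h n \<le> t \<and>
     (dos_idx M (Suc n) \<longrightarrow> t < h (Suc n))"

definition Bd_hat :: "enat \<Rightarrow> (nat \<Rightarrow> real) \<Rightarrow> (nat \<Rightarrow> real) \<Rightarrow> nat \<Rightarrow> real \<Rightarrow> real \<Rightarrow> real \<Rightarrow> real" where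
  "Bd_hat M h tau ell \<epsilon>0 \<theta> t =
     (if \<exists>n. ell \<le> n \<and> phase_d M h tau n t
      then Max ({\<epsilon>0} \<union> (\<lambda>i. \<theta> * Bd_i M h tau i + (1 - \<theta>)) ` {ell..(THE n. ell \<le> n \<and> phase_d M h tau n t)})
      else \<epsilon>0)"

definition Bf_hat :: "enat \<Rightarrow> (nat \<Rightarrow> real) \<Rightarrow> nat \<Rightarrow> real \<Rightarrow> real \<Rightarrow> real \<Rightarrow> real" where
  "Bf_hat M h ell \<epsilon>0 \<theta> t =
     (if \<exists>n. ell \<le> n \<and> phase_f M h n t
      then Max ({\<epsilon>0} \<union> (\<lambda>i. Bf_i h i / \<theta>) ` {ell..(THE n. ell \<le> n \<and> phase_f M h n t)})
      else \<epsilon>0)"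

text \<open>Sampling interval Delta_k as a function of the sampling time t_k.\<close>
definition sample_step :: "enat \<Rightarrow> (nat \<Rightarrow> real) \<Rightarrow> (nat \<Rightarrow> real) \<Rightarrow> nat \<Rightarrow> real \<Rightarrow> real
    \<Rightarrow> real \<Rightarrow> real \<Rightarrow> real \<Rightarrow> real" where
  "sample_step M h tau ell \<epsilon>0 \<theta> \<Delta>0 \<gamma>1 t =
     (if \<exists>n. phase_d M h tau n t
      then (let n = (THE n. phase_d M h tau n t) in
            min \<Delta>0 ((1 - Bd_hat M h tau ell \<epsilon>0 \<theta> (h n + tau n)) / (\<gamma>1 * Bf_hat M h ell \<epsilon>0 \<theta> (h n))))
      else \<Delta>0)"

definition laplacian :: "('n::finite \<Rightarrow> 'n \<Rightarrow> real) \<Rightarrow> real^'n^'n" where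
  "laplacian a = (\<chi> i j. if i = j then (\<Sum>k\<in>UNIV - {i}. a i k) else - a i j)"

text \<open>Irreducible matrix: no simultaneous permutation of rows/columns brings it to
  block triangular form, i.e. no nonempty proper index set S with L_ij = 0 for all
  i in S, j not in S.\<close>
definition irreducible_mat :: "real^'n^'n \<Rightarrow> bool" where
  "irreducible_mat L \<longleftrightarrow>
     (\<forall>S::'n set. S \<noteq> {} \<and> S \<noteq> UNIV \<longrightarrow> (\<exists>i\<in>S. \<exists>j. j \<notin> S \<and> L $ i $ j \<noteq> 0))"

definition lambda_max :: "real^'n^'n \<Rightarrow> real" where
  "lambda_max L = Max {mu. \<exists>v. v \<noteq> 0 \<and> L *v v = mu *\<^sub>R v}"

end

theory Submission
  imports Defs
begin

text \<open>Let e_k be the deviation of the sampled states from the initial average. Its sum stays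
  zero, it is unchanged at attacked sampling times, and at unattacked ones it is multiplied by
  I - Delta_k L, which contracts the sum-zero subspace by a fixed factor < 1 once
  0 < Delta_min \<le> Delta_k \<le> Delta_0 and Delta_0 lambda_N < 2. Outside the edge cases the
  estimates of the duration bound stay below 1 and those of the frequency bound stay bounded,
  which provides Delta_min. So it remains to show that infinitely many sampling times are not
  attacked. Otherwise every sampling step bridges the attack-free gap before the next attack, and
  the estimator makes that step at most theta^2/gamma_1 times the mean attack-free time per attack.
  Then the attack-free time before the j-th attack grows like j^(theta^2/gamma_1), sublinearly,
  whereas the duration and frequency bounds force it to grow linearly.\<close>

section \<open>Symmetric positive semidefinite matrices\<close>

lemma inner_matrix_vector_symmetric:
  fixes A :: "real^'n^'n"
  assumes "transpose A = A"
  shows "(A *v v) \<bullet> w = v \<bullet> (A *v w)"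
proof -
  have "v \<bullet> (A *v w) = (v v* A) \<bullet> w" by (simp add: dot_lmul_matrix)
  also have "v v* A = A *v v" using vector_transpose_matrix[of v A] assms by simp
  finally show ?thesis by simp
qed

lemma quadratic_form_scaleR:
  fixes A :: "real^'n^'n"
  shows "(c *\<^sub>R z) \<bullet> (A *v (c *\<^sub>R z)) = c\<^sup>2 * (z \<bullet> (A *v z))"
  by (simp add: matrix_vector_mult_scaleR power2_eq_square)

lemma psd_cauchy_schwarz:
  fixes A :: "real^'n^'n"
  assumes sym: "transpose A = A" and psd: "\<And>z. 0 \<le> z \<bullet> (A *v z)"
  shows "(u \<bullet> (A *v w))\<^sup>2 \<le> (u \<bullet> (A *v u)) * (w \<bullet> (A *v w))"
proof -
  define p q b where "p = u \<bullet> (A *v u)" and "q = w \<bullet> (A *v w)" and "b = u \<bullet> (A *v w)"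
  have "w \<bullet> (A *v u) = b"
    using inner_matrix_vector_symmetric[OF sym, of w u] by (simp add: b_def inner_commute)
  then have form: "0 \<le> p + 2 * s * b + s\<^sup>2 * q" for s
    using psd[of "u + s *\<^sub>R w"]
    by (simp add: p_def q_def b_def matrix_vector_right_distrib matrix_vector_mult_scaleR
        inner_add_left inner_add_right power2_eq_square algebra_simps)
  show ?thesis
  proof (cases "q = 0")
    case True
    have "b = 0"
    proof (rule ccontr)
      assume "b \<noteq> 0"
      then show False using form[of "- (p + 1) / (2 * b)"] True by (simp add: field_simps)
    qed
    then show ?thesis using True by (simp add: b_def q_def)
  next
    case False
    then have "q > 0" using psd[of w] by (simp add: q_def)
    then have "0 \<le> p - b\<^sup>2 / q"
      using form[of "- b / q"] by (simp add: power2_eq_square field_simps)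
    then show ?thesis using \<open>q > 0\<close> by (simp add: p_def q_def b_def field_simps mult.commute)
  qed
qed

lemma psd_quadratic_form_eq_0D:
  fixes A :: "real^'n^'n"
  assumes "transpose A = A" "\<And>z. 0 \<le> z \<bullet> (A *v z)" "v \<bullet> (A *v v) = 0"
  shows "A *v v = 0"
  using psd_cauchy_schwarz[OF assms(1,2), of "A *v v" v] assms(3) by simp

lemma finite_eigenvalues:
  fixes L :: "real^'n^'n"
  assumes "transpose L = L"
  shows "finite {mu. \<exists>v. v \<noteq> 0 \<and> L *v v = mu *\<^sub>R v}"
proof -
  let ?E = "{mu. \<exists>v. v \<noteq> 0 \<and> L *v v = mu *\<^sub>R v}"
  define f where "f mu = (SOME v. v \<noteq> 0 \<and> L *v v = mu *\<^sub>R v)" for mu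
  have f: "f mu \<noteq> 0 \<and> L *v f mu = mu *\<^sub>R f mu" if "mu \<in> ?E" for mu
    using that unfolding f_def by (metis (mono_tags, lifting) mem_Collect_eq someI_ex)
  have orthogonal: "f m1 \<bullet> f m2 = 0" if "m1 \<in> ?E" "m2 \<in> ?E" "m1 \<noteq> m2" for m1 m2
  proof -
    have "m1 * (f m1 \<bullet> f m2) = m2 * (f m1 \<bullet> f m2)"
      using inner_matrix_vector_symmetric[OF assms, of "f m1" "f m2"] f that by simp
    then show ?thesis using that(3) by simp
  qed
  have inj: "inj_on f ?E"
  proof (rule inj_onI)
    fix m1 m2 assume m: "m1 \<in> ?E" "m2 \<in> ?E" "f m1 = f m2"
    show "m1 = m2"
    proof (rule ccontr)
      assume "m1 \<noteq> m2"
      then have "f m1 \<bullet> f m1 = 0" using orthogonal[OF m(1,2)] m(3) by simp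
      then show False using f[OF m(1)] by simp
    qed
  qed
  have "pairwise orthogonal (f ` ?E)"
    unfolding pairwise_def orthogonal_def using orthogonal by auto
  moreover have "0 \<notin> f ` ?E" using f by force
  ultimately have "independent (f ` ?E)" using pairwise_orthogonal_independent by blast
  then have "finite (f ` ?E)" using independent_bound by blast
  then show ?thesis using finite_imageD inj by blast
qed

lemma eigenvalue_le_lambda_max:
  fixes L :: "real^'n^'n"
  assumes "transpose L = L" "v \<noteq> 0" "L *v v = mu *\<^sub>R v"
  shows "mu \<le> lambda_max L"
  unfolding lambda_max_def using finite_eigenvalues[OF assms(1)] assms(2,3) by (intro Max_ge) auto

text \<open>The maximum m of the quadratic form on the unit sphere is an eigenvalue: m I - L is positive
  semidefinite and its form vanishes at a maximiser.\<close>
lemma quadratic_form_le_lambda_max: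
  fixes L :: "real^'n^'n"
  assumes sym: "transpose L = L"
  shows "z \<bullet> (L *v z) \<le> lambda_max L * (z \<bullet> z)"
proof -
  have "continuous_on (sphere 0 1) (\<lambda>z. z \<bullet> (L *v z))"
    by (intro continuous_intros linear_continuous_on matrix_vector_mul_bounded_linear)
  moreover have "sphere (0::real^'n) 1 \<noteq> {}" by simp
  ultimately obtain v where v: "v \<in> sphere 0 1"
    and vmax: "\<And>y. y \<in> sphere 0 1 \<Longrightarrow> y \<bullet> (L *v y) \<le> v \<bullet> (L *v v)"
    using continuous_attains_sup[OF compact_sphere] by blast
  define m where "m = v \<bullet> (L *v v)"
  have bound: "y \<bullet> (L *v y) \<le> m * (y \<bullet> y)" for y
  proof (cases "y = 0")
    case False
    define u where "u = (1 / norm y) *\<^sub>R y"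
    have "y = norm y *\<^sub>R u" using False by (simp add: u_def)
    then have "y \<bullet> (L *v y) = (norm y)\<^sup>2 * (u \<bullet> (L *v u))"
      by (metis quadratic_form_scaleR)
    also have "\<dots> \<le> (norm y)\<^sup>2 * m"
      using vmax[of u] False by (intro mult_left_mono) (auto simp: m_def u_def)
    finally show ?thesis by (simp add: power2_norm_eq_inner mult.commute)
  qed simp
  define A where "A = m *\<^sub>R mat 1 - L"
  have A_mult: "A *v y = m *\<^sub>R y - L *v y" for y
    by (simp add: A_def matrix_vector_mult_diff_rdistrib scaleR_matrix_vector_assoc[symmetric])
  have "transpose A = m *\<^sub>R transpose (mat 1) - transpose L"
    by (simp add: A_def transpose_def vec_eq_iff)
  then have "transpose A = A" using sym by (simp add: A_def)
  moreover have "0 \<le> y \<bullet> (A *v y)" for y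
    using bound[of y] by (simp add: A_mult inner_diff_right)
  moreover have "v \<bullet> (A *v v) = 0"
    using v by (simp add: A_mult inner_diff_right m_def dot_square_norm)
  ultimately have "A *v v = 0" by (rule psd_quadratic_form_eq_0D)
  then have "L *v v = m *\<^sub>R v" by (simp add: A_mult)
  moreover have "v \<noteq> 0" using v by auto
  ultimately have "m \<le> lambda_max L" using eigenvalue_le_lambda_max[OF sym] by blast
  then show ?thesis using bound[of z] by (meson inner_ge_zero mult_right_mono order_trans)
qed

lemma quadratic_form_coercive_on_subspace:
  fixes A :: "real^'n^'n"
  assumes V: "subspace V" and pos: "\<And>z. z \<in> V \<Longrightarrow> z \<noteq> 0 \<Longrightarrow> 0 < z \<bullet> (A *v z)"
  shows "\<exists>c>0. \<forall>z\<in>V. c * (z \<bullet> z) \<le> z \<bullet> (A *v z)"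
proof -
  define K where "K = sphere 0 1 \<inter> V"
  have unit: "(1 / norm z) *\<^sub>R z \<in> K" if "z \<in> V" "z \<noteq> 0" for z
    using that V by (simp add: K_def subspace_scale)
  have scale: "z \<bullet> (A *v z) = (z \<bullet> z) * (u \<bullet> (A *v u))" if "u = (1 / norm z) *\<^sub>R z" "z \<noteq> 0" for z u
  proof -
    have "z = norm z *\<^sub>R u" using that by simp
    then show ?thesis by (metis quadratic_form_scaleR power2_norm_eq_inner)
  qed
  show ?thesis
  proof (cases "K = {}")
    case True
    then have "1 * (z \<bullet> z) \<le> z \<bullet> (A *v z)" if "z \<in> V" for z
      using unit that by (cases "z = 0") auto
    with zero_less_one show ?thesis by blast
  next
    case False
    have "compact K" unfolding K_def by (intro compact_Int_closed closed_subspace V) simp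
    moreover have "continuous_on K (\<lambda>z. z \<bullet> (A *v z))"
      by (intro continuous_intros linear_continuous_on matrix_vector_mul_bounded_linear)
    ultimately obtain z0 where z0: "z0 \<in> K" and zmin: "\<And>u. u \<in> K \<Longrightarrow> z0 \<bullet> (A *v z0) \<le> u \<bullet> (A *v u)"
      using continuous_attains_inf[OF _ False] by blast
    have "z0 \<in> V" "z0 \<noteq> 0" using z0 by (auto simp: K_def)
    then have "0 < z0 \<bullet> (A *v z0)" by (rule pos)
    moreover have "(z0 \<bullet> (A *v z0)) * (z \<bullet> z) \<le> z \<bullet> (A *v z)" if "z \<in> V" for z
    proof (cases "z = 0")
      case False
      define u where "u = (1 / norm z) *\<^sub>R z"
      have "(z \<bullet> z) * (z0 \<bullet> (A *v z0)) \<le> (z \<bullet> z) * (u \<bullet> (A *v u))"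
        using zmin[OF unit[OF that False], folded u_def] by (simp add: mult_left_mono)
      then show ?thesis using scale[OF u_def False] by (simp add: mult.commute)
    qed simp
    ultimately show ?thesis by blast
  qed
qed

lemma lambda_max_nonneg:
  fixes L :: "real^'n^'n"
  assumes "transpose L = L" "\<And>z. 0 \<le> z \<bullet> (L *v z)"
  shows "0 \<le> lambda_max L"
proof -
  define z :: "real^'n" where "z = (\<chi> i. 1)"
  have "0 < z \<bullet> z" by (simp add: z_def vec_eq_iff)
  moreover have "0 \<le> lambda_max L * (z \<bullet> z)"
    using quadratic_form_le_lambda_max[OF assms(1), of z] assms(2)[of z] by linarith
  ultimately show ?thesis by (meson not_le zero_le_mult_iff)
qed

text \<open>Cauchy-Schwarz for the semi-inner product of L applied to z and L z.\<close>
lemma inner_matrix_vector_le_lambda_max: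
  fixes L :: "real^'n^'n"
  assumes sym: "transpose L = L" and psd: "\<And>z. 0 \<le> z \<bullet> (L *v z)"
  shows "(L *v z) \<bullet> (L *v z) \<le> lambda_max L * (z \<bullet> (L *v z))"
proof (cases "L *v z = 0")
  case True
  then show ?thesis using lambda_max_nonneg[OF assms] psd[of z] by simp
next
  case False
  define y where "y = L *v z"
  have "(y \<bullet> y)\<^sup>2 = (z \<bullet> (L *v y))\<^sup>2"
    using inner_matrix_vector_symmetric[OF sym, of z y] by (simp add: y_def)
  also have "\<dots> \<le> (z \<bullet> (L *v z)) * (y \<bullet> (L *v y))" by (rule psd_cauchy_schwarz[OF assms])
  also have "\<dots> \<le> (z \<bullet> (L *v z)) * (lambda_max L * (y \<bullet> y))"
    using quadratic_form_le_lambda_max[OF sym] psd by (intro mult_left_mono) auto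
  finally have "(y \<bullet> y) * (y \<bullet> y) \<le> (lambda_max L * (z \<bullet> (L *v z))) * (y \<bullet> y)"
    by (simp add: power2_eq_square algebra_simps)
  moreover have "0 < y \<bullet> y" using False by (simp add: y_def)
  ultimately show ?thesis by (simp add: y_def)
qed

lemma gradient_step_contraction:
  fixes L :: "real^'n^'n"
  assumes sym: "transpose L = L" and psd: "\<And>z. 0 \<le> z \<bullet> (L *v z)"
    and D0: "D0 * lambda_max L \<le> 2" and D: "0 \<le> Dl" "Dl \<le> D" "D \<le> D0"
    and c: "0 \<le> c" "c * (e \<bullet> e) \<le> e \<bullet> (L *v e)"
  shows "(e - D *\<^sub>R (L *v e)) \<bullet> (e - D *\<^sub>R (L *v e))
           \<le> (1 - Dl * (2 - D0 * lambda_max L) * c) * (e \<bullet> e)"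
proof -
  define lam q where "lam = lambda_max L" and "q = e \<bullet> (L *v e)"
  have "(L *v e) \<bullet> e = q" using inner_matrix_vector_symmetric[OF sym, of e e] by (simp add: q_def)
  then have "(e - D *\<^sub>R (L *v e)) \<bullet> (e - D *\<^sub>R (L *v e))
        = e \<bullet> e - 2 * D * q + D * D * ((L *v e) \<bullet> (L *v e))"
    by (simp add: inner_diff_left inner_diff_right q_def algebra_simps)
  also have "\<dots> \<le> e \<bullet> e - 2 * D * q + D * D * (lam * q)"
    using inner_matrix_vector_le_lambda_max[OF sym psd, of e]
    by (intro add_left_mono mult_left_mono) (simp_all add: lam_def q_def)
  also have "\<dots> = e \<bullet> e - D * q * (2 - D * lam)" by (simp add: algebra_simps)
  also have "\<dots> \<le> e \<bullet> e - Dl * (c * (e \<bullet> e)) * (2 - D0 * lam)"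
  proof -
    have "0 \<le> lam" unfolding lam_def by (rule lambda_max_nonneg[OF sym psd])
    then have "2 - D0 * lam \<le> 2 - D * lam" using D by (simp add: mult_right_mono)
    moreover have "Dl * (c * (e \<bullet> e)) \<le> D * q"
      using D c by (intro mult_mono) (auto simp: q_def)
    moreover have "0 \<le> D * q" using D psd[of e] by (simp add: q_def)
    moreover have "0 \<le> 2 - D0 * lam" using D0 by (simp add: lam_def)
    ultimately have "Dl * (c * (e \<bullet> e)) * (2 - D0 * lam) \<le> D * q * (2 - D * lam)"
      by (metis mult_mono)
    then show ?thesis by simp
  qed
  finally show ?thesis by (simp add: lam_def algebra_simps)
qed

section \<open>Graph Laplacians\<close>

lemma adjacency_nonneg: "\<forall>i j. a i j \<in> {0, 1} \<Longrightarrow> 0 \<le> (a i j :: real)"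
  by (metis insert_iff singletonD order_refl zero_le_one)

lemma laplacian_mult:
  "(laplacian a *v v) $ i = (\<Sum>j\<in>UNIV. a i j * (v $ i - v $ j))"
proof -
  have "(laplacian a *v v) $ i = laplacian a $ i $ i * v $ i + (\<Sum>j\<in>UNIV - {i}. laplacian a $ i $ j * v $ j)"
    by (simp add: matrix_vector_mult_def sum.remove)
  also have "\<dots> = (\<Sum>j\<in>UNIV - {i}. a i j) * v $ i - (\<Sum>j\<in>UNIV - {i}. a i j * v $ j)"
  proof -
    have "(\<Sum>j\<in>UNIV - {i}. laplacian a $ i $ j * v $ j) = (\<Sum>j\<in>UNIV - {i}. - (a i j * v $ j))"
      by (intro sum.cong) (auto simp: laplacian_def)
    then show ?thesis by (simp add: laplacian_def sum_negf)
  qed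
  also have "\<dots> = (\<Sum>j\<in>UNIV - {i}. a i j * (v $ i - v $ j))"
    by (simp add: sum_distrib_left sum_subtractf right_diff_distrib mult.commute)
  also have "\<dots> = (\<Sum>j\<in>UNIV. a i j * (v $ i - v $ j))"
    by (simp add: sum.remove[of UNIV i])
  finally show ?thesis .
qed

lemma laplacian_symmetric_adjacency:
  assumes "transpose (laplacian a) = laplacian a"
  shows "a i j = a j i"
proof (cases "i = j")
  case False
  have "transpose (laplacian a) $ i $ j = laplacian a $ i $ j" using assms by simp
  then show ?thesis using False by (simp add: transpose_def laplacian_def)
qed simp

lemma sum_laplacian_mult:
  assumes "transpose (laplacian a) = laplacian a"
  shows "(\<Sum>i\<in>UNIV. (laplacian a *v v) $ i) = 0"
proof -
  have "(\<Sum>i\<in>UNIV. \<Sum>j\<in>UNIV. a i j * v $ j) = (\<Sum>i\<in>UNIV. \<Sum>j\<in>UNIV. a j i * v $ i)"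
    by (rule sum.swap)
  also have "\<dots> = (\<Sum>i\<in>UNIV. \<Sum>j\<in>UNIV. a i j * v $ i)"
    using laplacian_symmetric_adjacency[OF assms] by simp
  finally show ?thesis
    by (simp add: laplacian_mult right_diff_distrib sum_subtractf)
qed

lemma laplacian_quadratic_form:
  assumes "transpose (laplacian a) = laplacian a"
  shows "2 * (v \<bullet> (laplacian a *v v)) = (\<Sum>i\<in>UNIV. \<Sum>j\<in>UNIV. a i j * (v $ i - v $ j)\<^sup>2)"
proof -
  define T where "T = (\<Sum>i\<in>UNIV. \<Sum>j\<in>UNIV. a i j * (v $ i * (v $ i - v $ j)))"
  have T: "v \<bullet> (laplacian a *v v) = T"
    by (simp add: inner_vec_def laplacian_mult T_def sum_distrib_left algebra_simps)
  have "T = (\<Sum>i\<in>UNIV. \<Sum>j\<in>UNIV. a j i * (v $ j * (v $ j - v $ i)))"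
    unfolding T_def by (rule sum.swap)
  also have "\<dots> = (\<Sum>i\<in>UNIV. \<Sum>j\<in>UNIV. a i j * (v $ j * (v $ j - v $ i)))"
    using laplacian_symmetric_adjacency[OF assms] by simp
  finally have "2 * T = (\<Sum>i\<in>UNIV. \<Sum>j\<in>UNIV.
      a i j * (v $ i * (v $ i - v $ j)) + a i j * (v $ j * (v $ j - v $ i)))"
    by (simp add: T_def sum.distrib)
  also have "\<dots> = (\<Sum>i\<in>UNIV. \<Sum>j\<in>UNIV. a i j * (v $ i - v $ j)\<^sup>2)"
    by (intro sum.cong refl) (simp add: power2_eq_square algebra_simps)
  finally show ?thesis using T by simp
qed

lemma laplacian_psd:
  assumes "\<forall>i j. a i j \<in> {0, 1}" "transpose (laplacian a) = laplacian a"
  shows "0 \<le> v \<bullet> (laplacian a *v v)"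
proof -
  have "0 \<le> (\<Sum>i\<in>UNIV. \<Sum>j\<in>UNIV. a i j * (v $ i - v $ j)\<^sup>2)"
    using adjacency_nonneg[OF assms(1)] by (intro sum_nonneg mult_nonneg_nonneg) auto
  then show ?thesis using laplacian_quadratic_form[OF assms(2), of v] by simp
qed

lemma laplacian_quadratic_form_eq_0D:
  assumes adj: "\<forall>i j. a i j \<in> {0, 1}" and sym: "transpose (laplacian a) = laplacian a"
    and irr: "irreducible_mat (laplacian a)"
    and q0: "v \<bullet> (laplacian a *v v) = 0"
  shows "v $ i = v $ j"
proof -
  have nonneg: "0 \<le> a i j * (v $ i - v $ j)\<^sup>2" for i j
    using adjacency_nonneg[OF adj] by (intro mult_nonneg_nonneg) auto
  have "(\<Sum>i\<in>UNIV. \<Sum>j\<in>UNIV. a i j * (v $ i - v $ j)\<^sup>2) = 0"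
    using laplacian_quadratic_form[OF sym, of v] q0 by simp
  then have "a i j * (v $ i - v $ j)\<^sup>2 = 0" for i j
    using nonneg by (simp add: sum_nonneg_eq_0_iff sum_nonneg)
  then have edge: "v $ k = v $ l" if "laplacian a $ k $ l \<noteq> 0" "k \<noteq> l" for k l
    using that adj by (force simp: laplacian_def)
  define S where "S = {k. v $ k = v $ i}"
  have "S = UNIV"
  proof (rule ccontr)
    assume "S \<noteq> UNIV"
    moreover have "S \<noteq> {}" by (auto simp: S_def)
    ultimately obtain k l where "k \<in> S" "l \<notin> S" "laplacian a $ k $ l \<noteq> 0"
      using irr unfolding irreducible_mat_def by blast
    then show False using edge[of k l] by (auto simp: S_def)
  qed
  then have "j \<in> S" by simp
  then show ?thesis by (simp add: S_def)
qed

lemma laplacian_coercive: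
  fixes a :: "'n::finite \<Rightarrow> 'n \<Rightarrow> real"
  assumes adj: "\<forall>i j. a i j \<in> {0, 1}" and sym: "transpose (laplacian a) = laplacian a"
    and irr: "irreducible_mat (laplacian a)"
  shows "\<exists>c>0. \<forall>e. (\<Sum>i\<in>UNIV. e $ i) = 0 \<longrightarrow> c * (e \<bullet> e) \<le> e \<bullet> (laplacian a *v e)"
proof -
  let ?V = "{e :: real^'n. (\<Sum>i\<in>UNIV. e $ i) = 0}"
  have "subspace ?V" by (auto simp: subspace_def sum.distrib sum_distrib_left[symmetric])
  moreover have "0 < e \<bullet> (laplacian a *v e)" if "e \<in> ?V" "e \<noteq> 0" for e
  proof (rule ccontr)
    assume "\<not> 0 < e \<bullet> (laplacian a *v e)"
    then have "e \<bullet> (laplacian a *v e) = 0" using laplacian_psd[OF adj sym, of e] by simp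
    then have const: "e $ i = e $ j" for i j by (rule laplacian_quadratic_form_eq_0D[OF adj sym irr])
    fix j :: 'n
    have "(\<Sum>i\<in>UNIV. e $ i) = (\<Sum>i\<in>(UNIV :: 'n set). e $ j)" using const by (intro sum.cong) auto
    then have "real CARD('n) * e $ j = 0" using that(1) by simp
    then have "e = 0" using const[of _ j] by (simp add: vec_eq_iff)
    then show False using that(2) by contradiction
  qed
  ultimately show ?thesis using quadratic_form_coercive_on_subspace by blast
qed

section \<open>Real sequences and functions\<close>

lemma affine_if_constant_derivative:
  fixes f :: "real \<Rightarrow> real"
  assumes ab: "a < b" and cont: "continuous_on {a..b} f"
    and der: "\<And>s. s \<in> {a<..<b} \<Longrightarrow> (f has_real_derivative c) (at s)"
    and s: "s \<in> {a..b}"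
  shows "f s = f a + c * (s - a)"
proof -
  define g where "g y = f y - c * (y - a)" for y
  have "continuous_on {a..b} g" unfolding g_def using cont by (intro continuous_intros)
  moreover have "(g has_real_derivative 0) (at y)" if "a < y" "y < b" for y
    using der[of y] that unfolding g_def by (auto intro!: derivative_eq_intros)
  ultimately have "g s = g a" using DERIV_isconst2[OF ab] s by auto
  then show ?thesis by (simp add: g_def)
qed

lemma abs_affine_le_max_endpoints:
  fixes a u d D :: real
  assumes "0 \<le> d" "d \<le> D"
  shows "\<bar>a + u * d\<bar> \<le> max \<bar>a\<bar> \<bar>a + u * D\<bar>"
proof (cases "0 \<le> u")
  case True
  then have "0 \<le> u * d" "u * d \<le> u * D" using assms by (auto intro: mult_left_mono)
  then show ?thesis by linarith
next
  case False
  then have "u * d \<le> 0" "u * D \<le> u * d" using assms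
    by (auto intro: mult_left_mono_neg simp: mult_nonpos_nonneg)
  then show ?thesis by linarith
qed

lemma incseq_if_increment:
  fixes t :: "nat \<Rightarrow> real"
  assumes "\<And>k. t k + d \<le> t (Suc k)" "0 \<le> d"
  shows "incseq t"
proof (rule incseq_SucI)
  show "t k \<le> t (Suc k)" for k using assms(1)[of k] assms(2) by linarith
qed

lemma sampling_times_unbounded:
  fixes t :: "nat \<Rightarrow> real"
  assumes inc: "\<And>k. t k + d \<le> t (Suc k)" and d: "0 < d"
  shows "\<exists>k\<ge>K. X < t k"
proof -
  have lin: "t K + real n * d \<le> t (K + n)" for n
  proof (induction n)
    case (Suc n) then show ?case using inc[of "K + n"] by (simp add: algebra_simps)
  qed simp
  obtain n :: nat where "(X - t K) / d < real n" using reals_Archimedean2 by blast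
  then have "X < t (K + n)" using lin[of n] d by (simp add: divide_less_eq algebra_simps)
  then show ?thesis by (intro exI[of _ "K + n"]) simp
qed

lemma sampling_interval_exists:
  fixes t :: "nat \<Rightarrow> real"
  assumes inc: "\<And>k. t k + d \<le> t (Suc k)" and d: "0 < d" and s: "t K \<le> s"
  obtains k where "K \<le> k" "t k \<le> s" "s < t (Suc k)"
proof -
  have mono: "incseq t" using incseq_if_increment[of t d, OF inc] d by simp
  define n0 where "n0 = (LEAST n. s < t n)"
  obtain n where "s < t n" using sampling_times_unbounded[of t d, OF inc d] by blast
  then have n0: "s < t n0" unfolding n0_def by (rule LeastI)
  have "K < n0"
  proof (rule ccontr)
    assume "\<not> K < n0"
    then have "t n0 \<le> t K" using mono by (simp add: incseqD)
    then show False using n0 s by simp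
  qed
  then have "t (n0 - 1) \<le> s"
    using not_less_Least[of "n0 - 1" "\<lambda>n. s < t n"] unfolding n0_def[symmetric] by simp
  moreover have "Suc (n0 - 1) = n0" using \<open>K < n0\<close> by simp
  ultimately show ?thesis using that[of "n0 - 1"] n0 \<open>K < n0\<close> by simp
qed

lemma tendsto_zero_if_bounded_between_samples:
  fixes t b :: "nat \<Rightarrow> real" and f :: "real \<Rightarrow> real"
  assumes inc: "\<And>k. t k + d \<le> t (Suc k)" and d: "0 < d"
    and bound: "\<And>k s. t k \<le> s \<Longrightarrow> s \<le> t (Suc k) \<Longrightarrow> \<bar>f s\<bar> \<le> b k"
    and b: "b \<longlonglongrightarrow> 0"
  shows "(f \<longlongrightarrow> 0) at_top"
  unfolding tendsto_iff eventually_at_top_linorder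
proof (intro allI impI)
  fix \<epsilon> :: real assume "0 < \<epsilon>"
  then obtain K where K: "\<forall>k\<ge>K. norm (b k - 0) < \<epsilon>" using LIMSEQ_D[OF b] by blast
  have "dist (f s) 0 < \<epsilon>" if s: "t K \<le> s" for s
  proof -
    obtain k where "K \<le> k" "t k \<le> s" "s < t (Suc k)"
      using sampling_interval_exists[of t d, OF inc d s] .
    then show ?thesis using bound[of k s] K by force
  qed
  then show "\<exists>N. \<forall>s\<ge>N. dist (f s) 0 < \<epsilon>" by blast
qed

lemma tendsto_zero_if_affine_between_samples:
  fixes t c :: "nat \<Rightarrow> real" and f :: "real \<Rightarrow> real"
  assumes inc: "\<And>k. t k + d \<le> t (Suc k)" and d: "0 < d"
    and affine: "\<And>k s. t k \<le> s \<Longrightarrow> s \<le> t (Suc k) \<Longrightarrow> f s = f (t k) + c k * (s - t k)"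
    and samples: "(\<lambda>k. f (t k)) \<longlonglongrightarrow> 0"
  shows "(f \<longlongrightarrow> 0) at_top"
proof (rule tendsto_zero_if_bounded_between_samples[of t d, OF inc d])
  show "\<bar>f s\<bar> \<le> \<bar>f (t k)\<bar> + \<bar>f (t (Suc k))\<bar>" if "t k \<le> s" "s \<le> t (Suc k)" for k s
  proof -
    have "\<bar>f s\<bar> \<le> max \<bar>f (t k)\<bar> \<bar>f (t k) + c k * (t (Suc k) - t k)\<bar>"
      unfolding affine[OF that] using that by (intro abs_affine_le_max_endpoints) auto
    also have "\<dots> = max \<bar>f (t k)\<bar> \<bar>f (t (Suc k))\<bar>" using affine[of k "t (Suc k)"] that by simp
    finally show ?thesis by simp
  qed
  show "(\<lambda>k. \<bar>f (t k)\<bar> + \<bar>f (t (Suc k))\<bar>) \<longlonglongrightarrow> 0"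
    using tendsto_add[OF tendsto_rabs_zero[OF samples] LIMSEQ_Suc[OF tendsto_rabs_zero[OF samples]]]
    by simp
qed

lemma tendsto_zero_if_contracting_infinitely_often:
  fixes y :: "nat \<Rightarrow> real"
  assumes nonneg: "\<And>k. 0 \<le> y k" and dec: "\<And>k. y (Suc k) \<le> y k"
    and contract: "\<And>K. \<exists>k\<ge>K. y (Suc k) \<le> r * y k" and r: "r < 1"
  shows "y \<longlonglongrightarrow> 0"
proof -
  obtain l where l: "y \<longlonglongrightarrow> l" "\<And>k. l \<le> y k"
    using decseq_convergent[of y 0] dec nonneg by (metis decseq_SucI)
  have "l \<le> 0"
  proof (rule ccontr)
    assume "\<not> l \<le> 0"
    then have "r * l < l" using r by simp
    then have "eventually (\<lambda>k. r * y k < l) sequentially"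
      using order_tendstoD(2)[OF tendsto_mult_left[OF l(1)]] by blast
    then obtain K where "\<And>k. K \<le> k \<Longrightarrow> r * y k < l" by (auto simp: eventually_sequentially)
    moreover obtain k where "K \<le> k" "y (Suc k) \<le> r * y k" using contract by blast
    ultimately show False using l(2)[of "Suc k"] by fastforce
  qed
  moreover have "0 \<le> l" using LIMSEQ_le_const[OF l(1)] nonneg by blast
  ultimately show ?thesis using l(1) by simp
qed

lemma powr_mult_1_plus_le_powr_plus_1:
  fixes x c :: real
  assumes x: "0 < x" and c: "0 \<le> c"
  shows "x powr c * (1 + c / (x + 1)) \<le> (x + 1) powr c"
proof -
  define y where "y = (x + 1) / x"
  have y: "1 < y" using x by (simp add: y_def)
  have "1 / (x + 1) = 1 - 1 / y" using x by (simp add: y_def field_simps)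
  also have "\<dots> \<le> ln y" using ln_le_minus_one[of "1 / y"] y by (simp add: ln_div)
  finally have "1 + c / (x + 1) \<le> 1 + c * ln y" using c by (simp add: mult_left_mono divide_inverse)
  also have "\<dots> \<le> exp (c * ln y)" by (rule exp_ge_add_one_self)
  also have "\<dots> = y powr c" using y by (simp add: powr_def mult.commute)
  finally have "x powr c * (1 + c / (x + 1)) \<le> x powr c * y powr c" by (simp add: mult_left_mono)
  also have "\<dots> = (x + 1) powr c" using x y by (simp add: powr_mult[symmetric] y_def)
  finally show ?thesis .
qed

text \<open>Each factor 1 + c/(m - 1) is at most ((m - 1)/(m - 2))^c, so the factors telescope
  to a power of exponent c.\<close>
lemma powr_bound_of_growth_recurrence:
  fixes G :: "nat \<Rightarrow> real"
  assumes m0: "3 \<le> m0" and c: "0 \<le> c" and G0: "0 \<le> G m0"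
    and step: "\<And>j. m0 \<le> j \<Longrightarrow> \<exists>m. m0 \<le> m \<and> m \<le> j \<and> G (Suc j) \<le> G m * (1 + c / (real m - 1))"
    and j: "m0 \<le> j"
  shows "G j \<le> G m0 / (real m0 - 2) powr c * (real j - 2) powr c"
  using j
proof (induction j rule: less_induct)
  case (less j)
  define A where "A = G m0 / (real m0 - 2) powr c"
  have A0: "0 \<le> A" using G0 by (simp add: A_def)
  show ?case
  proof (cases "j = m0")
    case True
    then show ?thesis using m0 by (simp add: A_def)
  next
    case False
    then obtain j' where j': "j = Suc j'" "m0 \<le> j'" using less.prems by (cases j) auto
    obtain m where m: "m0 \<le> m" "m \<le> j'" "G j \<le> G m * (1 + c / (real m - 1))"
      using step[OF j'(2)] j'(1) by auto
    have "G m \<le> A * (real m - 2) powr c" using less.IH[of m] m j' by (simp add: A_def)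
    moreover have "0 \<le> 1 + c / (real m - 1)" using c m m0 by simp
    ultimately have "G j \<le> A * (real m - 2) powr c * (1 + c / (real m - 1))"
      using m(3) mult_right_mono order_trans by blast
    also have "\<dots> = A * ((real m - 2) powr c * (1 + c / ((real m - 2) + 1)))"
      by (simp add: algebra_simps)
    also have "\<dots> \<le> A * ((real m - 2) + 1) powr c"
      using powr_mult_1_plus_le_powr_plus_1[of "real m - 2" c] m m0 c A0
      by (intro mult_left_mono) auto
    also have "\<dots> \<le> A * (real j - 2) powr c"
      using m j' m0 c A0 by (intro mult_left_mono powr_mono2) auto
    finally show ?thesis by (simp add: A_def)
  qed
qed

lemma linear_not_le_powr:
  fixes \<alpha> \<beta> A c :: real
  assumes \<alpha>: "0 < \<alpha>" and c: "c < 1"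
  shows "\<not> (\<forall>j\<ge>m0. \<alpha> * real j - \<beta> \<le> A * real j powr c)"
proof
  assume bound: "\<forall>j\<ge>m0. \<alpha> * real j - \<beta> \<le> A * real j powr c"
  have "(\<lambda>j. \<alpha> - \<beta> / real j) \<longlonglongrightarrow> \<alpha> - 0"
    by (intro tendsto_diff tendsto_const tendsto_divide_0[OF tendsto_const]
        filterlim_at_top_imp_at_infinity filterlim_real_sequentially)
  moreover have "(\<lambda>j. A * real j powr (c - 1)) \<longlonglongrightarrow> A * 0"
    using c by (intro tendsto_mult tendsto_const tendsto_neg_powr filterlim_real_sequentially) auto
  moreover have "\<alpha> - \<beta> / real j \<le> A * real j powr (c - 1)" if "max m0 1 \<le> j" for j
  proof -
    have j: "0 < real j" using that by simp
    have "(\<alpha> * real j - \<beta>) / real j \<le> A * real j powr c / real j"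
      using bound that j by (simp add: divide_right_mono)
    then show ?thesis using j by (simp add: powr_diff diff_divide_distrib)
  qed
  ultimately have "\<alpha> - 0 \<le> A * 0" by (intro LIMSEQ_le) (auto intro: exI[of _ "max m0 1"])
  then show False using \<alpha> by simp
qed

section \<open>Sampled-data consensus\<close>

lemma laplacian_iteration_tendsto_zero:
  fixes a :: "'n::finite \<Rightarrow> 'n \<Rightarrow> real" and e :: "nat \<Rightarrow> real^'n"
  assumes adj: "\<forall>i j. a i j \<in> {0, 1}" and sym: "transpose (laplacian a) = laplacian a"
    and irr: "irreducible_mat (laplacian a)"
    and D: "0 < Dl" "\<And>k. Dl \<le> D k" "\<And>k. D k \<le> D0" and D0: "D0 * lambda_max (laplacian a) < 2"
    and e_Suc: "\<And>k. e (Suc k) = (if active k then e k - D k *\<^sub>R (laplacian a *v e k) else e k)"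
    and active: "\<And>K. \<exists>k\<ge>K. active k"
    and sum0: "(\<Sum>i\<in>UNIV. e 0 $ i) = 0"
  shows "e \<longlonglongrightarrow> 0"
proof -
  let ?L = "laplacian a"
  have sum: "(\<Sum>i\<in>UNIV. e k $ i) = 0" for k
  proof (induction k)
    case (Suc k)
    have "(\<Sum>i\<in>UNIV. (e k - D k *\<^sub>R (?L *v e k)) $ i) = (\<Sum>i\<in>UNIV. e k $ i) - D k * (\<Sum>i\<in>UNIV. (?L *v e k) $ i)"
      by (simp add: sum_subtractf sum_distrib_left)
    then show ?case using Suc sum_laplacian_mult[OF sym] by (simp add: e_Suc)
  qed (fact sum0)
  obtain c where c: "c > 0" "\<And>v. (\<Sum>i\<in>UNIV. v $ i) = 0 \<Longrightarrow> c * (v \<bullet> v) \<le> v \<bullet> (?L *v v)"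
    using laplacian_coercive[OF adj sym irr] by blast
  define r where "r = max 0 (1 - Dl * (2 - D0 * lambda_max ?L) * c)"
  have r: "0 \<le> r" "r < 1" using D(1) D0 c(1) by (auto simp: r_def)
  have psd: "\<And>z. 0 \<le> z \<bullet> (?L *v z)" by (rule laplacian_psd[OF adj sym])
  have contract: "e (Suc k) \<bullet> e (Suc k) \<le> r * (e k \<bullet> e k)" if "active k" for k
  proof -
    have "e (Suc k) \<bullet> e (Suc k) \<le> (1 - Dl * (2 - D0 * lambda_max ?L) * c) * (e k \<bullet> e k)"
      using that D D0 c sum by (auto simp: e_Suc intro!: gradient_step_contraction[OF sym psd])
    also have "\<dots> \<le> r * (e k \<bullet> e k)" unfolding r_def by (intro mult_right_mono) auto
    finally show ?thesis .
  qed
  have "(\<lambda>k. e k \<bullet> e k) \<longlonglongrightarrow> 0"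
  proof (rule tendsto_zero_if_contracting_infinitely_often)
    show "e (Suc k) \<bullet> e (Suc k) \<le> e k \<bullet> e k" for k
      using contract[of k] r mult_right_mono[of r 1 "e k \<bullet> e k"] by (cases "active k") (auto simp: e_Suc)
    show "\<exists>k\<ge>K. e (Suc k) \<bullet> e (Suc k) \<le> r * (e k \<bullet> e k)" for K
      using active contract by blast
  qed (use r in auto)
  then have "(\<lambda>k. norm (e k)) \<longlonglongrightarrow> 0"
    using tendsto_real_sqrt[of "\<lambda>k. e k \<bullet> e k" 0] by (simp add: norm_eq_sqrt_inner)
  then show ?thesis by (simp add: tendsto_norm_zero_iff)
qed

lemma sampled_laplacian_consensus:
  fixes a :: "'n::finite \<Rightarrow> 'n \<Rightarrow> real" and x :: "'n \<Rightarrow> real \<Rightarrow> real" and t D :: "nat \<Rightarrow> real"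
  assumes adj: "\<forall>i j. a i j \<in> {0, 1}" and sym: "transpose (laplacian a) = laplacian a"
    and irr: "irreducible_mat (laplacian a)"
    and D: "0 < Dl" "\<And>k. Dl \<le> D k" "\<And>k. D k \<le> D0" and D0: "D0 * lambda_max (laplacian a) < 2"
    and t0: "t 0 = 0" and t_Suc: "\<And>k. t (Suc k) = t k + D k"
    and unattacked: "\<And>K. \<exists>k\<ge>K. t k \<notin> S"
    and xcont: "\<forall>i. continuous_on {0..} (x i)"
    and xdyn: "\<And>k i s. s \<in> {t k<..<t (Suc k)} \<Longrightarrow> (x i has_real_derivative
          (if t k \<in> S then 0 else (\<Sum>j\<in>UNIV. a i j * (x j (t k) - x i (t k))))) (at s)"
  shows "((\<lambda>s. x i s - (\<Sum>j\<in>UNIV. x j 0) / real CARD('n)) \<longlongrightarrow> 0) at_top"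
proof -
  let ?L = "laplacian a"
  define avg where "avg = (\<Sum>j\<in>UNIV. x j 0) / real CARD('n)"
  define e where "e k = (\<chi> i. x i (t k) - avg)" for k
  define u where "u k i = (if t k \<in> S then 0 else - (?L *v e k) $ i)" for k i
  have inc: "t k + Dl \<le> t (Suc k)" for k using D t_Suc by simp
  have t_nonneg: "0 \<le> t k" for k using incseq_if_increment[of t Dl, OF inc] D(1) t0 by (metis incseqD le0 less_imp_le)
  have input: "(\<Sum>j\<in>UNIV. a i j * (x j (t k) - x i (t k))) = - (?L *v e k) $ i" for k i
    by (simp add: laplacian_mult e_def sum_negf[symmetric] algebra_simps)
  have der: "(x i has_real_derivative u k i) (at s)" if "s \<in> {t k<..<t (Suc k)}" for k i s
    using xdyn[OF that, of i] input[of i k] by (cases "t k \<in> S") (simp_all add: u_def)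
  have affine: "x i s - avg = (x i (t k) - avg) + u k i * (s - t k)"
    if "t k \<le> s" "s \<le> t (Suc k)" for k i s
  proof -
    have "continuous_on {t k..t (Suc k)} (x i)"
      using xcont t_nonneg[of k] by (auto intro: continuous_on_subset[of "{0..}"])
    then show ?thesis
      using affine_if_constant_derivative[of "t k" "t (Suc k)" "x i" "u k i" s] der inc[of k] D(1) that
      by auto
  qed
  have "e (Suc k) = (if t k \<notin> S then e k - D k *\<^sub>R (?L *v e k) else e k)" for k
    using affine[of k "t (Suc k)"] inc[of k] D(1) by (auto simp: vec_eq_iff e_def u_def t_Suc)
  moreover have "(\<Sum>i\<in>UNIV. e 0 $ i) = 0" by (simp add: e_def t0 sum_subtractf avg_def)
  ultimately have "e \<longlonglongrightarrow> 0"
    using laplacian_iteration_tendsto_zero[where e=e and D=D and active="\<lambda>k. t k \<notin> S",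
        OF adj sym irr D D0 _ unattacked] by blast
  then have "(\<lambda>k. e k $ i) \<longlonglongrightarrow> 0" using tendsto_vec_nth[of e 0 sequentially i] by simp
  then have "(\<lambda>k. x i (t k) - avg) \<longlonglongrightarrow> 0" by (simp add: e_def)
  then show ?thesis
    unfolding avg_def[symmetric] using affine inc D(1)
    by (intro tendsto_zero_if_affine_between_samples[where t=t and d=Dl and c="\<lambda>k. u k i"]) auto
qed

section \<open>DoS sequences and the estimator\<close>

lemma phase_f_unique:
  assumes g: "\<And>i j. dos_idx M j \<Longrightarrow> 1 \<le> i \<Longrightarrow> i < j \<Longrightarrow> g i < g j"
    and n: "phase_f M g n s" and n': "phase_f M g n' s"
  shows "n = n'"
proof -
  have False if "phase_f M g p s" "phase_f M g q s" "p < q" for p q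
  proof -
    have "dos_idx M q" "1 \<le> p" using that by (auto simp: phase_f_def dos_idx_def)
    then have "dos_idx M (Suc p)" using that(3)
      by (simp add: dos_idx_def) (meson Suc_leI enat_ord_simps(1) order_trans)
    then have "s < g (Suc p)" using that(1) by (simp add: phase_f_def)
    moreover have "g (Suc p) \<le> g q"
      using g[OF \<open>dos_idx M q\<close>, of "Suc p"] that(3) by (cases "Suc p = q") auto
    ultimately show False using that(2) by (simp add: phase_f_def)
  qed
  then show ?thesis using n n' by (metis linorder_neqE_nat)
qed

lemma Bf_hat_ge: "e0 \<le> Bf_hat M h ell e0 th s"
  unfolding Bf_hat_def by auto

lemma phase_d_eq_phase_f: "phase_d M h tau = phase_f M (\<lambda>n. h n + tau n)"
  by (simp add: fun_eq_iff phase_d_def phase_f_def)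

locale dos_sequence =
  fixes M :: enat and h tau :: "nat \<Rightarrow> real"
  assumes dos: "dos_seq M h tau"
begin

lemma dos_idx_downward: "dos_idx M n \<Longrightarrow> 1 \<le> m \<Longrightarrow> m \<le> n \<Longrightarrow> dos_idx M m"
  unfolding dos_idx_def by (meson enat_ord_simps(1) order_trans)

lemma dos_idx_ge_1: "dos_idx M n \<Longrightarrow> 1 \<le> n"
  by (simp add: dos_idx_def)

lemma tau_nonneg: "dos_idx M n \<Longrightarrow> 0 \<le> tau n"
  using dos by (simp add: dos_seq_def)

lemma end_less_next_start: "dos_idx M n \<Longrightarrow> dos_idx M (Suc n) \<Longrightarrow> h n + tau n < h (Suc n)"
  using dos by (simp add: dos_seq_def)

lemma end_less_start: "dos_idx M j \<Longrightarrow> 1 \<le> i \<Longrightarrow> i < j \<Longrightarrow> h i + tau i < h j"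
proof (induction j)
  case (Suc j)
  have j: "dos_idx M j" using Suc.prems dos_idx_downward[of "Suc j" j] by simp
  show ?case
  proof (cases "i = j")
    case False
    then have "h i + tau i < h j" using Suc j by simp
    then show ?thesis using end_less_next_start[OF j Suc.prems(1)] tau_nonneg[OF j] by linarith
  qed (use end_less_next_start j Suc.prems in simp)
qed simp

lemma start_strict_mono: "dos_idx M j \<Longrightarrow> 1 \<le> i \<Longrightarrow> i < j \<Longrightarrow> h i < h j"
  using end_less_start[of j i] tau_nonneg[of i] dos_idx_downward[of j i] by force

lemma start_mono: "dos_idx M j \<Longrightarrow> 1 \<le> i \<Longrightarrow> i \<le> j \<Longrightarrow> h i \<le> h j"
  using start_strict_mono[of j i] by (cases "i = j") auto

lemma end_mono: "dos_idx M j \<Longrightarrow> 1 \<le> i \<Longrightarrow> i \<le> j \<Longrightarrow> h i + tau i \<le> h j + tau j"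
  using end_less_start[of j i] tau_nonneg[of j] by (cases "i = j") force+

lemma start_nonneg: "dos_idx M n \<Longrightarrow> 0 \<le> h n"
  using dos start_mono[of n 1] dos_idx_downward[of n 1] dos_idx_ge_1[of n]
  by (simp add: dos_seq_def)

lemma start_pos: "dos_idx M n \<Longrightarrow> 2 \<le> n \<Longrightarrow> 0 < h n"
  using end_less_start[of n 1] start_nonneg[of 1] tau_nonneg[of 1] dos_idx_downward[of n 1]
  by force

lemma phase_d_unique:
  assumes "phase_d M h tau n s" "phase_d M h tau n' s"
  shows "n = n'"
proof (rule phase_f_unique)
  show "h i + tau i < h j + tau j" if "dos_idx M j" "1 \<le> i" "i < j" for i j
    using end_less_start[OF that] tau_nonneg[OF that(1)] by linarith
qed (use assms in \<open>simp_all add: phase_d_eq_phase_f\<close>)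

lemma phase_f_unique_start:
  assumes "phase_f M h n s" "phase_f M h n' s"
  shows "n = n'"
  by (rule phase_f_unique[OF start_strict_mono assms])

lemma phase_d_at_end: "dos_idx M n \<Longrightarrow> phase_d M h tau n (h n + tau n)"
  unfolding phase_d_def using end_less_next_start tau_nonneg by fastforce

lemma phase_f_at_start: "dos_idx M n \<Longrightarrow> phase_f M h n (h n)"
  unfolding phase_f_def using end_less_next_start tau_nonneg by fastforce

lemma Bd_hat_eq:
  assumes "phase_d M h tau n s" "ell \<le> n"
  shows "Bd_hat M h tau ell e0 th s = Max ({e0} \<union> (\<lambda>i. th * Bd_i M h tau i + (1 - th)) ` {ell..n})"
proof -
  have "(THE n. ell \<le> n \<and> phase_d M h tau n s) = n" using assms phase_d_unique by blast
  then show ?thesis using assms unfolding Bd_hat_def by auto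
qed

lemma Bf_hat_eq:
  assumes "phase_f M h n s" "ell \<le> n"
  shows "Bf_hat M h ell e0 th s = Max ({e0} \<union> (\<lambda>i. Bf_i h i / th) ` {ell..n})"
proof -
  have "(THE n. ell \<le> n \<and> phase_f M h n s) = n" using assms phase_f_unique_start by blast
  then show ?thesis using assms unfolding Bf_hat_def by auto
qed

lemma sample_step_eq:
  assumes "phase_d M h tau n s"
  shows "sample_step M h tau ell e0 th D0 g1 s =
     min D0 ((1 - Bd_hat M h tau ell e0 th (h n + tau n)) / (g1 * Bf_hat M h ell e0 th (h n)))"
proof -
  have "(THE n. phase_d M h tau n s) = n" using assms phase_d_unique by blast
  then show ?thesis using assms unfolding sample_step_def by (auto simp: Let_def)
qed

lemma Bd_hat_ge_Bd_i:
  assumes "dos_idx M n" "ell \<le> n"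
  shows "th * Bd_i M h tau n + (1 - th) \<le> Bd_hat M h tau ell e0 th (h n + tau n)"
  by (subst Bd_hat_eq[OF phase_d_at_end[OF assms(1)] assms(2)]) (rule Max_ge, use assms in auto)

lemma Bf_hat_ge_Bf_i:
  assumes "dos_idx M n" "ell \<le> n"
  shows "Bf_i h n / th \<le> Bf_hat M h ell e0 th (h n)"
  by (subst Bf_hat_eq[OF phase_f_at_start[OF assms(1)] assms(2)]) (rule Max_ge, use assms in auto)

lemma Bd_hat_le:
  assumes "e0 \<le> U" "\<And>i. dos_idx M i \<Longrightarrow> ell \<le> i \<Longrightarrow> th * Bd_i M h tau i + (1 - th) \<le> U"
    and "1 \<le> ell"
  shows "Bd_hat M h tau ell e0 th s \<le> U"
proof (cases "\<exists>n. ell \<le> n \<and> phase_d M h tau n s")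
  case True
  then obtain n where n: "ell \<le> n" "phase_d M h tau n s" by blast
  then have "dos_idx M n" by (simp add: phase_d_def)
  then show ?thesis using assms dos_idx_downward n
    by (subst Bd_hat_eq[OF n(2) n(1)]) (auto intro: order_trans)
next
  case False
  then have "Bd_hat M h tau ell e0 th s = e0" unfolding Bd_hat_def by (rule if_not_P)
  then show ?thesis using assms(1) by simp
qed

lemma Bf_hat_le:
  assumes "e0 \<le> U" "\<And>i. dos_idx M i \<Longrightarrow> ell \<le> i \<Longrightarrow> Bf_i h i / th \<le> U"
    and "1 \<le> ell"
  shows "Bf_hat M h ell e0 th s \<le> U"
proof (cases "\<exists>n. ell \<le> n \<and> phase_f M h n s")
  case True
  then obtain n where n: "ell \<le> n" "phase_f M h n s" by blast
  then have "dos_idx M n" by (simp add: phase_f_def)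
  then show ?thesis using assms dos_idx_downward n
    by (subst Bf_hat_eq[OF n(2) n(1)]) (auto intro: order_trans)
next
  case False
  then have "Bf_hat M h ell e0 th s = e0" unfolding Bf_hat_def by (rule if_not_P)
  then show ?thesis using assms(1) by simp
qed

lemma dos_attack_setE:
  assumes "s \<in> dos_attack_set M h tau"
  obtains n where "dos_idx M n" "h n \<le> s" "s \<le> h n + tau n"
  using assms tau_nonneg unfolding dos_attack_set_def by force

lemma dos_attack_set_sets: "dos_attack_set M h tau \<in> sets lborel"
  unfolding dos_attack_set_def by (intro sets.countable_UN'') auto

lemma XiI_sets: "XiI M h tau a b \<in> sets lborel"
  unfolding XiI_def by (intro sets.Int dos_attack_set_sets) simp

lemma XiI_fmeasurable: "XiI M h tau a b \<in> fmeasurable lborel"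
  by (rule fmeasurableI2[OF fmeasurable_cbox[of a b, unfolded cbox_interval] _ XiI_sets])
    (auto simp: XiI_def)

lemma measure_XiI_le: "0 \<le> T \<Longrightarrow> measure lborel (XiI M h tau 0 T) \<le> T"
  using measure_mono_fmeasurable[of "XiI M h tau 0 T" "{0..T}" lborel] XiI_fmeasurable
  by (auto simp: XiI_def fmeasurable_def)

lemma sum_tau_le_measure_XiI:
  assumes S: "finite S" "\<And>k. k \<in> S \<Longrightarrow> dos_idx M k" "\<And>k. k \<in> S \<Longrightarrow> h k + tau k \<le> T"
  shows "(\<Sum>k\<in>S. tau k) \<le> measure lborel (XiI M h tau 0 T)"
proof -
  define A where "A k = {h k ..< h k + tau k}" for k
  have "A k \<inter> A k' = {}" if "k \<in> S" "k' \<in> S" "k < k'" for k k'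
    using end_less_start[of k' k] S(2)[OF that(2)] dos_idx_ge_1[OF S(2)[OF that(1)]] that(3)
    by (auto simp: A_def)
  then have "disjoint_family_on A S"
    unfolding disjoint_family_on_def by (metis inf_commute linorder_neqE_nat)
  then have "(\<Sum>k\<in>S. tau k) = measure lborel (\<Union>k\<in>S. A k)"
    using tau_nonneg S by (subst measure_finite_Union) (auto simp: A_def)
  also have "\<dots> \<le> measure lborel (XiI M h tau 0 T)"
  proof (rule measure_mono_fmeasurable[OF _ _ XiI_fmeasurable])
    show "(\<Union>k\<in>S. A k) \<subseteq> XiI M h tau 0 T"
      using S start_nonneg by (force simp: A_def XiI_def dos_attack_set_def)
  qed (auto simp: A_def intro!: sets.finite_UN S(1))
  finally show ?thesis .
qed

text \<open>The gap between consecutive attacks bounds the attacked proportion away from 1.\<close>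
lemma Bd_i_less_1:
  assumes i: "dos_idx M i" "2 \<le> i"
  shows "Bd_i M h tau i < 1"
proof -
  define T a where "T = h i + tau i" and "a = h (i - 1) + tau (i - 1)"
  have i1: "dos_idx M (i - 1)" using dos_idx_downward[OF i(1)] i(2) by simp
  have a: "0 \<le> a" "a < h i" "h i \<le> T"
    using start_nonneg[OF i1] tau_nonneg[OF i1] tau_nonneg[OF i(1)] end_less_start[OF i(1), of "i - 1"] i(2)
    by (auto simp: a_def T_def)
  have "XiI M h tau 0 T \<subseteq> {0..T} - {a<..<h i}"
  proof
    fix s assume s: "s \<in> XiI M h tau 0 T"
    then obtain n where n: "dos_idx M n" "h n \<le> s" "s \<le> h n + tau n"
      by (auto simp: XiI_def elim: dos_attack_setE)
    have "h n + tau n \<le> a \<or> h i \<le> h n"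
      using end_mono[OF i1, of n] start_mono[OF n(1), of i] dos_idx_ge_1[OF n(1)] i(2)
      by (cases "n \<le> i - 1") (auto simp: a_def)
    then show "s \<in> {0..T} - {a<..<h i}" using s n by (auto simp: XiI_def)
  qed
  then have "measure lborel (XiI M h tau 0 T) \<le> measure lborel ({0..T} - {a<..<h i})"
    by (intro measure_mono_fmeasurable XiI_sets fmeasurable_Diff
        fmeasurable_cbox[of 0 T, unfolded cbox_interval]) auto
  also have "\<dots> = T - (h i - a)"
    using a by (subst measure_Diff) (auto simp: emeasure_lborel_Icc_eq)
  finally have "measure lborel (XiI M h tau 0 T) < T" using a by simp
  then show ?thesis using a by (simp add: Bd_i_def T_def[symmetric])
qed

end

locale bounded_dos = dos_sequence +
  fixes B \<kappa> F :: real and \<Lambda> :: nat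
  assumes B: "0 \<le> B" "B < 1" "0 < \<kappa>"
    and duration: "\<And>t. 0 \<le> t \<Longrightarrow> measure lborel (XiI M h tau 0 t) \<le> \<kappa> + B * t"
    and F: "0 \<le> F"
    and frequency: "\<And>t. 0 \<le> t \<Longrightarrow> finite (dos_starts M h 0 t)"
      "\<And>t. 0 \<le> t \<Longrightarrow> real (card (dos_starts M h 0 t)) \<le> real \<Lambda> + F * t"

text \<open>Only the exclusion of conditions (i) and (ii) of edge_case is used.\<close>
lemma (in dos_sequence) bounded_dos_if_not_edge_case:
  assumes "\<not> edge_case M h tau"
  obtains B \<kappa> F \<Lambda> where "bounded_dos M h tau B \<kappa> F \<Lambda>"
proof -
  let ?DB = "duration_bounds M h tau"
  have "measure lborel (XiI M h tau 0 t) \<le> 1 + 1 * t" if "0 \<le> t" for t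
    using measure_XiI_le[OF that] by simp
  then have "1 \<in> ?DB" unfolding duration_bounds_def by (auto intro!: exI[of _ 1])
  have "bdd_below ?DB" unfolding duration_bounds_def by (rule bdd_belowI[of _ 0]) auto
  then have "Inf ?DB \<le> 1" by (rule cInf_lower[OF \<open>1 \<in> ?DB\<close>])
  moreover have "Inf ?DB \<noteq> 1" using assms by (simp add: edge_case_def)
  ultimately have "Inf ?DB < 1" by simp
  then obtain B where "B \<in> ?DB" "B < 1" using cInf_lessD[of ?DB 1] \<open>1 \<in> ?DB\<close> by blast
  then obtain \<kappa> where B: "0 \<le> B" "B < 1" "0 < \<kappa>"
    "\<forall>t\<ge>0. measure lborel (XiI M h tau 0 t) \<le> \<kappa> + B * t"
    unfolding duration_bounds_def by blast
  have "frequency_bounds M h \<noteq> {}"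
  proof
    assume "frequency_bounds M h = {}"
    then have "(INF B\<in>frequency_bounds M h. ereal B) = \<infinity>" by (simp add: top_ereal_def)
    then show False using assms by (simp add: edge_case_def)
  qed
  then obtain F \<Lambda> where F: "0 \<le> F"
    "\<forall>t\<ge>0. finite (dos_starts M h 0 t) \<and> real (card (dos_starts M h 0 t)) \<le> real \<Lambda> + F * t"
    unfolding frequency_bounds_def by blast
  show ?thesis using B F by (intro that[of B \<kappa> F \<Lambda>]) (unfold_locales, auto)
qed

context dos_sequence
begin

text \<open>The length of the attack-free part of [0, h p).\<close>
definition free_time :: "nat \<Rightarrow> real" where
  "free_time p = h p - (\<Sum>k\<in>{1..<p}. tau k)"

lemma sum_tau_le_measure_XiI_end:
  assumes p: "dos_idx M p"
  shows "(\<Sum>k\<in>{1..<p}. tau k) + tau p \<le> measure lborel (XiI M h tau 0 (h p + tau p))"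
proof -
  have "(\<Sum>k\<in>{1..<Suc p}. tau k) \<le> measure lborel (XiI M h tau 0 (h p + tau p))"
    using p by (intro sum_tau_le_measure_XiI) (auto intro: dos_idx_downward end_mono)
  then show ?thesis using dos_idx_ge_1[OF p] by (simp add: sum.atLeastLessThan_Suc)
qed

lemma free_time_nonneg:
  assumes p: "dos_idx M p"
  shows "0 \<le> free_time p"
proof -
  have "(\<Sum>k\<in>{1..<p}. tau k) + tau p \<le> h p + tau p"
    using sum_tau_le_measure_XiI_end[OF p] measure_XiI_le[of "h p + tau p"]
      start_nonneg[OF p] tau_nonneg[OF p] by linarith
  then show ?thesis by (simp add: free_time_def)
qed

lemma free_time_diff_le:
  assumes "dos_idx M j" "1 \<le> m" "m < j"
  shows "free_time j - free_time m \<le> h j - (h m + tau m)"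
proof -
  have "(\<Sum>k\<in>{1..<j}. tau k) = (\<Sum>k\<in>{1..<m}. tau k) + (\<Sum>k\<in>{m..<j}. tau k)"
    using assms by (intro sum.atLeastLessThan_concat[symmetric]) auto
  also have "(\<Sum>k\<in>{m..<j}. tau k) = tau m + (\<Sum>k\<in>{Suc m..<j}. tau k)"
    using assms by (simp add: sum.atLeast_Suc_lessThan)
  moreover have "0 \<le> (\<Sum>k\<in>{Suc m..<j}. tau k)"
    using assms by (intro sum_nonneg tau_nonneg dos_idx_downward[OF assms(1)]) auto
  ultimately show ?thesis by (simp add: free_time_def)
qed

lemma free_time_mono:
  assumes "dos_idx M q" "1 \<le> p" "p \<le> q"
  shows "free_time p \<le> free_time q"
  using assms
proof (induction q)
  case (Suc q)
  show ?case
  proof (cases "p = Suc q")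
    case False
    then have q: "dos_idx M q" "p \<le> q" using Suc.prems dos_idx_downward[of "Suc q" q] by auto
    have "free_time q \<le> free_time (Suc q)"
      using end_less_next_start[OF q(1) Suc.prems(1)] dos_idx_ge_1[OF q(1)]
      by (simp add: free_time_def sum.atLeastLessThan_Suc)
    then show ?thesis using Suc.IH q Suc.prems(2) by linarith
  qed simp
qed simp

lemma one_minus_Bd_i_le:
  assumes p: "dos_idx M p" "2 \<le> p"
  shows "1 - Bd_i M h tau p \<le> free_time p / (h p + tau p)"
proof -
  define T where "T = h p + tau p"
  have T: "0 < T" using start_pos[OF p] tau_nonneg[OF p(1)] by (simp add: T_def)
  have "T - measure lborel (XiI M h tau 0 T) \<le> free_time p"
    using sum_tau_le_measure_XiI_end[OF p(1)] by (simp add: free_time_def T_def)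
  then have "(T - measure lborel (XiI M h tau 0 T)) / T \<le> free_time p / T"
    using T by (simp add: divide_right_mono)
  then show ?thesis using T by (simp add: Bd_i_def T_def[symmetric] diff_divide_distrib)
qed

lemma sample_step_le_free_time:
  assumes th: "0 < th" "th < 1" and g1: "0 < g1" and ell: "2 \<le> ell"
    and p: "dos_idx M p" "ell \<le> p" and s: "phase_d M h tau p s"
  shows "sample_step M h tau ell e0 th D0 g1 s \<le> th * th / g1 * (free_time p / real p)"
proof -
  define a b T where "a = Bd_hat M h tau ell e0 th (h p + tau p)"
    and "b = Bf_hat M h ell e0 th (h p)" and "T = h p + tau p"
  have p2: "2 \<le> p" using ell p by simp
  have hp: "0 < h p" "h p \<le> T" using start_pos[OF p(1) p2] tau_nonneg[OF p(1)] by (auto simp: T_def)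
  have G: "0 \<le> free_time p" by (rule free_time_nonneg[OF p(1)])
  have "th * Bd_i M h tau p + (1 - th) \<le> a" unfolding a_def by (rule Bd_hat_ge_Bd_i[OF p])
  then have "1 - a \<le> th * (1 - Bd_i M h tau p)" by (simp add: algebra_simps)
  also have "\<dots> \<le> th * (free_time p / T)"
    using mult_left_mono[OF one_minus_Bd_i_le[OF p(1) p2], of th] th by (simp add: T_def)
  finally have num: "1 - a \<le> th * (free_time p / T)" .
  have "Bf_i h p / th \<le> b" unfolding b_def by (rule Bf_hat_ge_Bf_i[OF p])
  then have "real p / (th * h p) \<le> b" by (simp add: Bf_i_def divide_divide_eq_left mult.commute)
  then have den: "g1 * (real p / (th * h p)) \<le> g1 * b" using g1 by (intro mult_left_mono) auto
  have "sample_step M h tau ell e0 th D0 g1 s \<le> (1 - a) / (g1 * b)"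
    using sample_step_eq[OF s] by (simp add: a_def b_def)
  also have "\<dots> \<le> (th * (free_time p / T)) / (g1 * (real p / (th * h p)))"
    using num den th g1 G hp p2 by (intro frac_le) auto
  also have "\<dots> = th * th / g1 * (free_time p / real p) * (h p / T)"
    using th g1 p2 hp by (simp add: field_simps)
  also have "\<dots> \<le> th * th / g1 * (free_time p / real p)"
    using hp th g1 G p2 by (intro mult_left_le) (auto simp: divide_le_eq)
  finally show ?thesis .
qed

end

lemma sample_step_le_D0: "sample_step M h tau ell e0 th D0 g1 s \<le> D0"
  unfolding sample_step_def by (auto simp: Let_def)

context bounded_dos
begin

lemma index_le_start_bound:
  assumes i: "dos_idx M i"
  shows "real i \<le> real \<Lambda> + F * h i"
proof -
  have sub: "h ` {1..i} \<subseteq> dos_starts M h 0 (h i)"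
  proof
    fix x assume "x \<in> h ` {1..i}"
    then obtain k where k: "1 \<le> k" "k \<le> i" "x = h k" by auto
    then have "dos_idx M k" using dos_idx_downward[OF i] by simp
    then show "x \<in> dos_starts M h 0 (h i)"
      using k start_nonneg start_mono[OF i k(1,2)] unfolding dos_starts_def by auto
  qed
  have "inj_on h {1..i}"
    using start_strict_mono dos_idx_downward[OF i]
    by (intro strict_mono_on_imp_inj_on strict_mono_onI) auto
  then have "i = card (h ` {1..i})" by (simp add: card_image)
  also have "\<dots> \<le> card (dos_starts M h 0 (h i))"
    by (rule card_mono[OF frequency(1)[OF start_nonneg[OF i]] sub])
  finally have "real i \<le> real (card (dos_starts M h 0 (h i)))" by simp
  then show ?thesis using frequency(2)[OF start_nonneg[OF i]] by linarith
qed

lemma free_time_ge: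
  assumes p: "dos_idx M p"
  shows "(1 - B) * h p - \<kappa> \<le> free_time p"
proof -
  have "(\<Sum>k\<in>{1..<p}. tau k) \<le> measure lborel (XiI M h tau 0 (h p))"
    using p by (intro sum_tau_le_measure_XiI) (auto intro: dos_idx_downward end_less_start[THEN less_imp_le])
  also have "\<dots> \<le> \<kappa> + B * h p" by (rule duration[OF start_nonneg[OF p]])
  finally show ?thesis by (simp add: free_time_def algebra_simps)
qed

lemma free_time_linear_lower_bound:
  obtains \<alpha> \<beta> where "0 < \<alpha>" "\<And>j. dos_idx M j \<Longrightarrow> \<alpha> * real j - \<beta> \<le> free_time j"
proof
  define \<alpha> \<beta> where "\<alpha> = (1 - B) / (F + 1)" and "\<beta> = (1 - B) * real \<Lambda> / (F + 1) + \<kappa>"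
  show "0 < \<alpha>" using B F by (simp add: \<alpha>_def)
  show "\<alpha> * real j - \<beta> \<le> free_time j" if j: "dos_idx M j" for j
  proof -
    have "real j \<le> real \<Lambda> + (F + 1) * h j"
      using index_le_start_bound[OF j] start_nonneg[OF j] by (simp add: algebra_simps)
    then have "(real j - real \<Lambda>) / (F + 1) \<le> h j" using F by (simp add: divide_le_eq mult.commute)
    then have "(1 - B) * ((real j - real \<Lambda>) / (F + 1)) \<le> (1 - B) * h j"
      using B by (intro mult_left_mono) auto
    moreover have "\<alpha> * real j - \<beta> = (1 - B) * ((real j - real \<Lambda>) / (F + 1)) - \<kappa>"
      by (simp add: \<alpha>_def \<beta>_def diff_divide_distrib right_diff_distrib mult.commute)
    ultimately have "\<alpha> * real j - \<beta> \<le> (1 - B) * h j - \<kappa>" by simp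
    also have "\<dots> \<le> free_time j" by (rule free_time_ge[OF j])
    finally show ?thesis .
  qed
qed


text \<open>Late attacks obey the duration bound; there are only finitely many early ones.\<close>
lemma Bd_i_uniform_bound:
  obtains bd where "bd < 1" "\<And>i. dos_idx M i \<Longrightarrow> 2 \<le> i \<Longrightarrow> Bd_i M h tau i \<le> bd"
proof -
  define T0 where "T0 = 2 * \<kappa> / (1 - B)"
  have T0: "0 < T0" using B by (simp add: T0_def)
  define I0 where "I0 = {i. dos_idx M i \<and> 2 \<le> i \<and> h i + tau i < T0}"
  have small: "real i \<le> real \<Lambda> + F * T0" if "i \<in> I0" for i
  proof -
    have i: "dos_idx M i" "h i \<le> T0" using that tau_nonneg[of i] by (auto simp: I0_def)
    then have "F * h i \<le> F * T0" using F by (simp add: mult_left_mono)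
    then show ?thesis using index_le_start_bound[OF i(1)] by linarith
  qed
  have "i \<le> nat \<lceil>real \<Lambda> + F * T0\<rceil>" if "i \<in> I0" for i
    using small[OF that] real_nat_ceiling_ge[of "real \<Lambda> + F * T0"] by (metis of_nat_le_iff order_trans)
  then have "I0 \<subseteq> {..nat \<lceil>real \<Lambda> + F * T0\<rceil>}" by auto
  then have fin: "finite (insert ((1 + B) / 2) (Bd_i M h tau ` I0))"
    using finite_subset by blast
  define bd where "bd = Max (insert ((1 + B) / 2) (Bd_i M h tau ` I0))"
  have "bd \<in> insert ((1 + B) / 2) (Bd_i M h tau ` I0)" unfolding bd_def by (rule Max_in[OF fin]) simp
  then have "bd < 1" using B Bd_i_less_1 by (auto simp: I0_def)
  moreover have "Bd_i M h tau i \<le> bd" if i: "dos_idx M i" "2 \<le> i" for i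
  proof (cases "i \<in> I0")
    case False
    define T where "T = h i + tau i"
    have T: "T0 \<le> T" "0 < T" using False i T0 by (auto simp: I0_def T_def)
    have "Bd_i M h tau i \<le> (\<kappa> + B * T) / T"
      using duration[of T] T by (simp add: Bd_i_def T_def[symmetric] divide_right_mono)
    also have "\<dots> \<le> \<kappa> / T0 + B"
      using T B T0 divide_left_mono[of T0 T \<kappa>] by (simp add: add_divide_distrib)
    also have "\<kappa> / T0 + B = (1 + B) / 2" using B by (simp add: T0_def field_simps)
    also have "\<dots> \<le> bd" unfolding bd_def using fin by (rule Max_ge) simp
    finally show ?thesis .
  qed (use fin in \<open>auto simp: bd_def\<close>)
  ultimately show ?thesis using that by blast
qed

lemma Bf_i_uniform_bound:
  obtains bf where "\<And>i. dos_idx M i \<Longrightarrow> 2 \<le> i \<Longrightarrow> Bf_i h i \<le> bf"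
proof (cases "dos_idx M 2")
  case True
  have "Bf_i h i \<le> real \<Lambda> / h 2 + F" if i: "dos_idx M i" "2 \<le> i" for i
  proof -
    have h: "0 < h 2" "h 2 \<le> h i" using start_pos[OF True] start_mono[OF i(1)] i by auto
    have "Bf_i h i \<le> (real \<Lambda> + F * h i) / h i"
      using index_le_start_bound[OF i(1)] h by (simp add: Bf_i_def divide_right_mono)
    also have "\<dots> \<le> real \<Lambda> / h 2 + F"
      using h by (simp add: add_divide_distrib frac_le)
    finally show ?thesis .
  qed
  then show ?thesis using that by blast
next
  case False
  then have "\<not> (dos_idx M i \<and> 2 \<le> i)" for i using dos_idx_downward[of i 2] by auto
  then show ?thesis using that by blast
qed

lemma Bd_hat_uniform_bound:
  assumes e0: "e0 < 1" and th: "0 < th" "th < 1" and ell: "2 \<le> ell"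
  obtains U where "U < 1" "\<And>s. Bd_hat M h tau ell e0 th s \<le> U"
proof -
  obtain bd where bd: "bd < 1" "\<And>i. dos_idx M i \<Longrightarrow> 2 \<le> i \<Longrightarrow> Bd_i M h tau i \<le> bd"
    using Bd_i_uniform_bound by blast
  define U where "U = max e0 (th * bd + (1 - th))"
  have "Bd_hat M h tau ell e0 th s \<le> U" for s
  proof (rule Bd_hat_le)
    show "th * Bd_i M h tau i + (1 - th) \<le> U" if "dos_idx M i" "ell \<le> i" for i
    proof -
      have "th * Bd_i M h tau i \<le> th * bd" using bd(2)[OF that(1)] that(2) ell th by (intro mult_left_mono) auto
      then show ?thesis by (simp add: U_def)
    qed
  qed (use ell in \<open>simp_all add: U_def\<close>)
  moreover have "U < 1" using e0 th bd(1) by (simp add: U_def)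
  ultimately show ?thesis using that by blast
qed

lemma Bf_hat_uniform_bound:
  assumes th: "0 < th" and ell: "2 \<le> ell"
  obtains V where "\<And>s. Bf_hat M h ell e0 th s \<le> V"
proof -
  obtain bf where bf: "\<And>i. dos_idx M i \<Longrightarrow> 2 \<le> i \<Longrightarrow> Bf_i h i \<le> bf"
    using Bf_i_uniform_bound by blast
  have "Bf_hat M h ell e0 th s \<le> max e0 (bf / th)" for s
  proof (rule Bf_hat_le)
    show "Bf_i h i / th \<le> max e0 (bf / th)" if "dos_idx M i" "ell \<le> i" for i
      using bf[OF that(1)] that(2) ell th divide_right_mono[of "Bf_i h i" bf th] by simp
  qed (use ell in simp_all)
  then show ?thesis using that by blast
qed

lemma sample_step_lower_bound:
  assumes e0: "0 < e0" "e0 < 1" and th: "0 < th" "th < 1" and g1: "0 < g1" and D0: "0 < D0"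
    and ell: "2 \<le> ell"
  obtains Dl where "0 < Dl" "\<And>s. Dl \<le> sample_step M h tau ell e0 th D0 g1 s"
proof -
  obtain U where U: "U < 1" "\<And>s. Bd_hat M h tau ell e0 th s \<le> U"
    using Bd_hat_uniform_bound[OF e0(2) th ell] by blast
  obtain V where V: "\<And>s. Bf_hat M h ell e0 th s \<le> V"
    using Bf_hat_uniform_bound[OF th(1) ell] by blast
  have V0: "0 < V" using V[of 0] Bf_hat_ge[of e0 M h ell th 0] e0 by linarith
  define Dl where "Dl = min D0 ((1 - U) / (g1 * V))"
  have "Dl \<le> sample_step M h tau ell e0 th D0 g1 s" for s
  proof (cases "\<exists>n. phase_d M h tau n s")
    case True
    then obtain n where n: "phase_d M h tau n s" by blast
    have "(1 - U) / (g1 * V) \<le> (1 - Bd_hat M h tau ell e0 th (h n + tau n)) / (g1 * Bf_hat M h ell e0 th (h n))"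
      using U(1) U(2)[of "h n + tau n"] V[of "h n"] g1 e0 Bf_hat_ge[of e0 M h ell th "h n"]
      by (intro frac_le) auto
    then show ?thesis by (simp add: sample_step_eq[OF n] Dl_def)
  qed (simp add: sample_step_def Dl_def)
  moreover have "0 < Dl" using D0 U(1) V0 g1 by (simp add: Dl_def)
  ultimately show ?thesis using that by blast
qed

end

section \<open>Unattacked sampling times\<close>

lemma (in dos_sequence) phase_d_of_attacked:
  assumes m: "dos_idx M m" "2 \<le> m" and s: "h m \<le> s" "s \<le> h m + tau m"
  obtains p where "phase_d M h tau p s" "m - 1 \<le> p" "p \<le> m"
proof (cases "h m + tau m \<le> s")
  case True
  then have "phase_d M h tau m s"
    using m s end_less_next_start[OF m(1)] tau_nonneg unfolding phase_d_def by fastforce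
  then show ?thesis using that by simp
next
  case False
  have m1: "dos_idx M (m - 1)" "Suc (m - 1) = m" using dos_idx_downward[OF m(1)] m(2) by auto
  then have "phase_d M h tau (m - 1) s"
    using False s m end_less_next_start[OF m1(1)] unfolding phase_d_def by fastforce
  then show ?thesis using that by simp
qed

locale dos_sampling = bounded_dos +
  fixes ell :: nat and e0 th D0 g1 :: real and t :: "nat \<Rightarrow> real"
  assumes ell: "2 \<le> ell" and e0: "0 < e0" "e0 < 1" and th: "0 < th" "th < 1"
    and D0_pos: "0 < D0" and g1: "1 < g1"
    and t_Suc: "\<And>k. t (Suc k) = t k + sample_step M h tau ell e0 th D0 g1 (t k)"
begin

lemma sample_step_bounded_below:
  obtains Dl where "0 < Dl" "\<And>s. Dl \<le> sample_step M h tau ell e0 th D0 g1 s"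
proof -
  have "0 < g1" using g1 by simp
  then show ?thesis using sample_step_lower_bound[OF e0 th _ D0_pos ell] that by blast
qed

lemma sampling_increment:
  obtains d where "0 < d" "\<And>k. t k + d \<le> t (Suc k)"
  using sample_step_bounded_below t_Suc by (metis add_left_mono)

text \<open>While every sample is attacked, the attack-free time between two attack ends is covered
  by a single sampling step, which the estimator keeps below th^2/g1 times the average free time
  per attack.\<close>
lemma free_time_growth_if_always_attacked:
  assumes att: "\<And>k. K \<le> k \<Longrightarrow> t k \<in> dos_attack_set M h tau" and M: "M = \<infinity>"
    and m0: "ell < m0" "h m0 \<le> t K" "t K \<le> h m0 + tau m0" and j: "m0 \<le> j"
  shows "\<exists>m. m0 \<le> m \<and> m \<le> j \<and> free_time (Suc j) \<le> free_time m * (1 + th * th / g1 / (real m - 1))"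
proof -
  obtain d where d: "0 < d" "\<And>k. t k + d \<le> t (Suc k)" using sampling_increment by blast
  have idx: "dos_idx M n" if "1 \<le> n" for n using M that by (simp add: dos_idx_def)
  have "t K \<le> h j + tau j" using m0 end_mono[OF idx[of j], of m0] j ell by simp
  then obtain k where k: "K \<le> k" "t k \<le> h j + tau j" "h j + tau j < t (Suc k)"
    using sampling_interval_exists[of t d, OF d(2) d(1)] by blast
  obtain m where m: "dos_idx M m" "h m \<le> t k" "t k \<le> h m + tau m"
    using att[OF k(1)] by (rule dos_attack_setE)
  obtain m' where m': "dos_idx M m'" "h m' \<le> t (Suc k)" "t (Suc k) \<le> h m' + tau m'"
    using att[of "Suc k"] k(1) by (auto elim: dos_attack_setE)
  have "j < m'"
    using end_mono[OF idx[of j], of m'] dos_idx_ge_1[OF m'(1)] k(3) m'(3) m0 j ell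
    by (cases "m' \<le> j") auto
  then have hj: "h (Suc j) \<le> t (Suc k)" using start_mono[OF m'(1), of "Suc j"] m'(2) by simp
  have mj: "m \<le> j"
    using end_less_start[OF m(1), of j] m0 j ell k(2) m(2) by (cases "m \<le> j") auto
  have "t K \<le> t k" using k(1) incseq_if_increment[of t d, OF d(2)] d(1) by (simp add: incseqD)
  then have mm0: "m0 \<le> m"
    using end_less_start[OF idx[of m0], of m] dos_idx_ge_1[OF m(1)] m0 m ell
    by (cases "m0 \<le> m") auto
  obtain p where p: "phase_d M h tau p (t k)" "m - 1 \<le> p" "p \<le> m"
    using phase_d_of_attacked[OF m(1) _ m(2,3)] mm0 m0 ell by auto
  define c where "c = th * th / g1"
  have "c \<ge> 0" using th g1 by (simp add: c_def)
  have "sample_step M h tau ell e0 th D0 g1 (t k) \<le> c * (free_time p / real p)"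
    unfolding c_def using p mm0 m0 g1 ell by (intro sample_step_le_free_time[OF th _ ell idx]) auto
  also have "\<dots> \<le> c * (free_time m / (real m - 1))"
    using free_time_nonneg[OF m(1)] free_time_mono[OF m(1), of p] p mm0 m0 ell \<open>c \<ge> 0\<close>
    by (intro mult_left_mono frac_le) auto
  finally have step: "sample_step M h tau ell e0 th D0 g1 (t k) \<le> c * (free_time m / (real m - 1))" .
  have "free_time (Suc j) - free_time m \<le> h (Suc j) - (h m + tau m)"
    using free_time_diff_le[OF idx, of "Suc j" m] dos_idx_ge_1[OF m(1)] mj by simp
  also have "\<dots> \<le> sample_step M h tau ell e0 th D0 g1 (t k)" using hj m(3) t_Suc[of k] by simp
  finally show ?thesis
    using step mm0 mj by (intro exI[of _ m]) (simp add: c_def algebra_simps)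
qed

lemma free_time_sublinear_if_always_attacked:
  assumes M: "M = \<infinity>" and att: "\<And>k. K \<le> k \<Longrightarrow> t k \<in> dos_attack_set M h tau"
  obtains m0 A where "0 \<le> A" "\<And>j. m0 \<le> j \<Longrightarrow> free_time j \<le> A * real j powr (th * th / g1)"
proof -
  obtain d where d: "0 < d" "\<And>k. t k + d \<le> t (Suc k)" using sampling_increment by blast
  have idx: "dos_idx M n" if "1 \<le> n" for n using M that by (simp add: dos_idx_def)
  obtain K' where K': "K \<le> K'" "h (ell + 1) < t K'" using sampling_times_unbounded[of t d, OF d(2,1)] by blast
  have att': "t k \<in> dos_attack_set M h tau" if "K' \<le> k" for k using att K'(1) that by simp
  obtain m0 where m0: "dos_idx M m0" "h m0 \<le> t K'" "t K' \<le> h m0 + tau m0"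
    using att'[OF order_refl] by (rule dos_attack_setE)
  have "ell < m0"
    using end_less_start[OF idx[of "ell + 1"], of m0] dos_idx_ge_1[OF m0(1)] K'(2) m0(3)
    by (cases "ell < m0") auto
  define c where "c = th * th / g1"
  have "0 \<le> c" using th g1 by (simp add: c_def)
  define A where "A = free_time m0 / (real m0 - 2) powr c"
  have "0 \<le> A" using free_time_nonneg[OF m0(1)] by (simp add: A_def)
  have "free_time j \<le> A * real j powr c" if "m0 \<le> j" for j
  proof -
    have "free_time j \<le> A * (real j - 2) powr c"
      unfolding A_def c_def using \<open>ell < m0\<close> ell free_time_nonneg[OF m0(1)] that th g1
        free_time_growth_if_always_attacked[OF att' M \<open>ell < m0\<close> m0(2,3)]
      by (intro powr_bound_of_growth_recurrence) auto
    also have "\<dots> \<le> A * real j powr c"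
      using that \<open>ell < m0\<close> ell \<open>0 \<le> A\<close> \<open>0 \<le> c\<close> by (intro mult_left_mono powr_mono2) auto
    finally show ?thesis .
  qed
  then show ?thesis using that[OF \<open>0 \<le> A\<close>] unfolding c_def by blast
qed

lemma unattacked_samples_unbounded: "\<exists>k\<ge>K. t k \<notin> dos_attack_set M h tau"
proof (rule ccontr)
  assume "\<not> ?thesis"
  then have att: "\<And>k. K \<le> k \<Longrightarrow> t k \<in> dos_attack_set M h tau" by auto
  show False
  proof (cases M)
    case (enat N)
    obtain d where d: "0 < d" "\<And>k. t k + d \<le> t (Suc k)" using sampling_increment by blast
    obtain k where k: "K \<le> k" "h N + tau N < t k" using sampling_times_unbounded[of t d, OF d(2,1)] by blast
    obtain n where n: "dos_idx M n" "t k \<le> h n + tau n" using att[OF k(1)] by (auto elim: dos_attack_setE)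
    then have "h n + tau n \<le> h N + tau N"
      using end_mono[of N n] dos_idx_ge_1[of n] enat by (simp add: dos_idx_def)
    then show False using n k by simp
  next
    case infinity
    obtain m0 A where A: "\<And>j. m0 \<le> j \<Longrightarrow> free_time j \<le> A * real j powr (th * th / g1)"
      using free_time_sublinear_if_always_attacked[OF infinity att] by blast
    obtain \<alpha> \<beta> where \<alpha>: "0 < \<alpha>" and lower: "\<And>j. dos_idx M j \<Longrightarrow> \<alpha> * real j - \<beta> \<le> free_time j"
      using free_time_linear_lower_bound by blast
    have "\<alpha> * real j - \<beta> \<le> A * real j powr (th * th / g1)" if "max m0 1 \<le> j" for j
      using lower[of j] A[of j] that infinity by (simp add: dos_idx_def)
    moreover have "th * th / g1 < 1"
      using th g1 mult_strict_mono[of th 1 th 1] by (simp add: divide_less_eq)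
    ultimately show False using linear_not_le_powr[OF \<alpha>] by blast
  qed
qed

end

theorem theorem3:
  fixes a :: "'n::finite \<Rightarrow> 'n \<Rightarrow> real"
    and M :: enat and h tau :: "nat \<Rightarrow> real"
    and ell :: nat and \<epsilon>0 \<theta> \<Delta>0 \<gamma>1 :: real
    and t :: "nat \<Rightarrow> real"
    and x :: "'n \<Rightarrow> real \<Rightarrow> real"
  assumes adj: "\<forall>i j. a i j \<in> {0, 1}"
    and sym: "transpose (laplacian a) = laplacian a"
    and irr: "irreducible_mat (laplacian a)"
    and dos: "dos_seq M h tau"
    and not_edge: "\<not> edge_case M h tau"
    and ell_ge: "2 \<le> ell"
    and eps: "0 < \<epsilon>0" "\<epsilon>0 < 1"
    and theta: "0 < \<theta>" "\<theta> < 1"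
    and D0: "0 < \<Delta>0" "\<bar>1 - \<Delta>0 * lambda_max (laplacian a)\<bar> < 1"
    and gam: "1 < \<gamma>1"
    and t1: "t 1 = 0"
    and tstep: "\<forall>k\<ge>1. t (Suc k) = t k + sample_step M h tau ell \<epsilon>0 \<theta> \<Delta>0 \<gamma>1 (t k)"
    and xcont: "\<forall>i. continuous_on {0..} (x i)"
    and xdyn: "\<forall>k\<ge>1. \<forall>i. \<forall>s\<in>{t k<..<t (Suc k)}.
       (x i has_real_derivative
          (if t k \<in> dos_attack_set M h tau then 0
           else (\<Sum>j\<in>UNIV. a i j * (x j (t k) - x i (t k))))) (at s)"
  shows "(\<forall>i. ((\<lambda>s. x i s - (\<Sum>j\<in>UNIV. x j 0) / real CARD('n)) \<longlongrightarrow> 0) at_top)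
       \<and> (\<exists>\<Delta>l>0. \<forall>k\<ge>1. \<Delta>l \<le> sample_step M h tau ell \<epsilon>0 \<theta> \<Delta>0 \<gamma>1 (t k))"
proof -
  interpret dos_sequence M h tau by (rule dos_sequence.intro[OF dos])
  obtain B \<kappa> F \<Lambda> where "bounded_dos M h tau B \<kappa> F \<Lambda>"
    using bounded_dos_if_not_edge_case[OF not_edge] by blast
  then interpret bounded_dos M h tau B \<kappa> F \<Lambda> .
  define T where "T k = t (Suc k)" for k \<comment> \<open>the statement indexes sampling times from 1\<close>
  interpret dos_sampling M h tau B \<kappa> F \<Lambda> ell \<epsilon>0 \<theta> \<Delta>0 \<gamma>1 T
    using ell_ge eps theta D0(1) gam tstep by unfold_locales (auto simp: T_def)
  obtain Dl where Dl: "0 < Dl" "\<And>s. Dl \<le> sample_step M h tau ell \<epsilon>0 \<theta> \<Delta>0 \<gamma>1 s"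
    using sample_step_bounded_below by blast
  have "\<Delta>0 * lambda_max (laplacian a) < 2" using D0(2) by linarith
  moreover have "T 0 = 0" using t1 by (simp add: T_def)
  moreover have "(x i has_real_derivative (if T k \<in> dos_attack_set M h tau then 0
      else (\<Sum>j\<in>UNIV. a i j * (x j (T k) - x i (T k))))) (at s)" if "s \<in> {T k<..<T (Suc k)}" for k i s
    using spec[OF xdyn, of "Suc k"] that unfolding T_def by auto
  ultimately have "((\<lambda>s. x i s - (\<Sum>j\<in>UNIV. x j 0) / real CARD('n)) \<longlongrightarrow> 0) at_top" for i
    using sampled_laplacian_consensus[OF adj sym irr Dl sample_step_le_D0 _ _ t_Suc
        unattacked_samples_unbounded xcont] by blast
  then show ?thesis using Dl by blast
qed

end
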